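(* Let $(A,\Delta,\epsilon)$ be a biunital bialgebra over $k$, and let $W$ be the left ideal of $A\otimes A$ generated by $\{\epsilon(a)(1\otimes 1)-\Delta(a)\mid a\in A\}$. Then the left $A\otimes A$-module $(A\otimes A)/W$ is a preantipode for the modulation $(A,\boldsymbol{\Delta},\boldsymbol{\epsilon})$ of $A$ (where $\boldsymbol\Delta$ is $A\otimes A$ with left $A\otimes A$-action by multiplication and right $A$-action $x\cdot b=x\Delta(b)$, and $\boldsymbol\epsilon=k$ with right $A$-action $\lambda\cdot b=\lambda\epsilon(b)$). If moreover $A$ is a Hopf algebra with antipode $S$, then $(A\otimes A)/W$ is isomorphic, as an $(A,A^{op})$-bimodule, to the modulation $\mathbf{S}$ of $S$ (viewed as a homomorphism $A^{op}\to A$), namely $A$ with $a\cdot x\cdot b=a\,x\,S(b)$, via $[a\otimes b]\mapsto aS(b)$; consequently $(A,\boldsymbol\Delta,\boldsymbol\epsilon,\mathbf S)$ is a hopfish algebra.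
   Context: $k$ is a commutative ring, $\otimes=\otimes_k$, and ${}^*$ denotes the $k$-dual. A sesquiunital sesquialgebra over $k$ is a unital $k$-algebra $A$ with an $(A\otimes A,A)$-bimodule $\boldsymbol\Delta$ (coproduct) and a right $A$-module $\boldsymbol\epsilon$ (counit) such that $(A\otimes\boldsymbol\Delta)\otimes_{A\otimes A}\boldsymbol\Delta\cong(\boldsymbol\Delta\otimes A)\otimes_{A\otimes A}\boldsymbol\Delta$ as $(A\otimes A\otimes A,A)$-bimodules, and $(\boldsymbol\epsilon\otimes A)\otimes_{A\otimes A}\boldsymbol\Delta$ and $(A\otimes\boldsymbol\epsilon)\otimes_{A\otimes A}\boldsymbol\Delta$ are both isomorphic to $A$ as $(A,A)$-bimodules. The space $Z'=\mathrm{Hom}_A(\boldsymbol\epsilon,\boldsymbol\Delta)$ of right $A$-module maps is a right $A\otimes A$-module via $(g b)(u)=g(bu)$. A preantipode is a left $A\otimes A$-module $\mathbf S$ together with an isomorphism of right $A\otimes A$-modules $\mathbf S^*\cong Z'$; $\mathbf S$ is regarded as an $(A,A^{op})$-bimodule (left $A$ from the first factor, right $A^{op}$ from the second). A preantipode is an antipode, and $A$ with it is a hopfish algebra, if $\mathbf S$ is free of rank one as a left $A$-module. *)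

theory Defs
  imports Main
begin

text \<open>The n-fold tensor power of A over k is built
concretely: the free k-module on lists of length n (finitely supported functions
'a list => 'k), modulo the k-span of the multilinearity relations.  Elements of the tensor power
are the equivalence classes (cosets), i.e. sets of such functions.\<close>

definition fsupp :: "('b \<Rightarrow> 'k::zero) \<Rightarrow> 'b set" where
  "fsupp f = {x. f x \<noteq> 0}"

definition free :: "nat \<Rightarrow> ('a list \<Rightarrow> 'k::zero) set" where
  "free n = {f. finite (fsupp f) \<and> (\<forall>xs\<in>fsupp f. length xs = n)}"

definition bv :: "'a list \<Rightarrow> 'a list \<Rightarrow> 'k::zero_neq_one" where
  "bv xs = (\<lambda>ys. if ys = xs then 1 else 0)"

definition rep :: "'x set \<Rightarrow> 'x" where
  "rep X = (SOME f. f \<in> X)"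

definition fmul :: "('a::times list \<Rightarrow> 'k::comm_ring_1) \<Rightarrow> ('a list \<Rightarrow> 'k) \<Rightarrow> 'a list \<Rightarrow> 'k" where
  "fmul f g zs = (\<Sum>p\<in>fsupp f \<times> fsupp g.
      if map2 (*) (fst p) (snd p) = zs then f (fst p) * g (snd p) else 0)"

definition fcat :: "('a list \<Rightarrow> 'k::comm_ring_1) \<Rightarrow> ('a list \<Rightarrow> 'k) \<Rightarrow> 'a list \<Rightarrow> 'k" where
  "fcat f g zs = (\<Sum>p\<in>fsupp f \<times> fsupp g.
      if fst p @ snd p = zs then f (fst p) * g (snd p) else 0)"

definition flin :: "('a list \<Rightarrow> 'k::comm_ring_1) \<Rightarrow> ('a list \<Rightarrow> 'b list \<Rightarrow> 'k) \<Rightarrow> 'b list \<Rightarrow> 'k" where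
  "flin f F = (\<lambda>zs. \<Sum>xs\<in>fsupp f. f xs * F xs zs)"

locale kctx =
  fixes sc :: "'k::comm_ring_1 \<Rightarrow> 'a::ring_1 \<Rightarrow> 'a"
begin

definition kalgebra :: bool where
  "kalgebra \<longleftrightarrow>
     (\<forall>c x y. sc c (x + y) = sc c x + sc c y) \<and>
     (\<forall>c d x. sc (c + d) x = sc c x + sc d x) \<and>
     (\<forall>c d x. sc (c * d) x = sc c (sc d x)) \<and>
     (\<forall>x. sc 1 x = x) \<and>
     (\<forall>c x y. sc c (x * y) = sc c x * y) \<and>
     (\<forall>c x y. sc c (x * y) = x * sc c y)"

definition relgens :: "nat \<Rightarrow> ('a list \<Rightarrow> 'k) set" where
  "relgens n =
     {(\<lambda>zs. bv (xs @ [a + b] @ ys) zs - bv (xs @ [a] @ ys) zs - bv (xs @ [b] @ ys) zs)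
        | xs a b ys. length xs + length ys + 1 = n}
   \<union> {(\<lambda>zs. bv (xs @ [sc c a] @ ys) zs - c * bv (xs @ [a] @ ys) zs)
        | xs c a ys. length xs + length ys + 1 = n}"

definition rel :: "nat \<Rightarrow> ('a list \<Rightarrow> 'k) set" where
  "rel n = {f. \<exists>t r. finite t \<and> t \<subseteq> relgens n \<and> f = (\<lambda>zs. \<Sum>g\<in>t. r g * g zs)}"

definition cls :: "nat \<Rightarrow> ('a list \<Rightarrow> 'k) \<Rightarrow> ('a list \<Rightarrow> 'k) set" where
  "cls n f = {g \<in> free n. (\<lambda>zs. g zs - f zs) \<in> rel n}"

definition T :: "nat \<Rightarrow> ('a list \<Rightarrow> 'k) set set" where
  "T n = cls n ` free n"

definition tens :: "'a list \<Rightarrow> ('a list \<Rightarrow> 'k) set" where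
  "tens xs = cls (length xs) (bv xs)"

definition tadd :: "nat \<Rightarrow> ('a list \<Rightarrow> 'k) set \<Rightarrow> ('a list \<Rightarrow> 'k) set \<Rightarrow> ('a list \<Rightarrow> 'k) set" where
  "tadd n X Y = cls n (\<lambda>zs. rep X zs + rep Y zs)"

definition tneg :: "nat \<Rightarrow> ('a list \<Rightarrow> 'k) set \<Rightarrow> ('a list \<Rightarrow> 'k) set" where
  "tneg n X = cls n (\<lambda>zs. - rep X zs)"

definition tsc :: "nat \<Rightarrow> 'k \<Rightarrow> ('a list \<Rightarrow> 'k) set \<Rightarrow> ('a list \<Rightarrow> 'k) set" where
  "tsc n c X = cls n (\<lambda>zs. c * rep X zs)"

definition tzero :: "nat \<Rightarrow> ('a list \<Rightarrow> 'k) set" where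
  "tzero n = cls n (\<lambda>_. 0)"

definition tmul :: "nat \<Rightarrow> ('a list \<Rightarrow> 'k) set \<Rightarrow> ('a list \<Rightarrow> 'k) set \<Rightarrow> ('a list \<Rightarrow> 'k) set" where
  "tmul n X Y = cls n (fmul (rep X) (rep Y))"

definition tone :: "nat \<Rightarrow> ('a list \<Rightarrow> 'k) set" where
  "tone n = tens (replicate n 1)"

definition alin :: "('a list \<Rightarrow> 'k) \<Rightarrow> ('a list \<Rightarrow> 'a) \<Rightarrow> 'a" where
  "alin f F = (\<Sum>xs\<in>fsupp f. sc (f xs) (F xs))"

definition bialgebra :: "('a \<Rightarrow> ('a list \<Rightarrow> 'k) set) \<Rightarrow> ('a \<Rightarrow> 'k) \<Rightarrow> bool" where
  "bialgebra \<Delta> \<epsilon> \<longleftrightarrow>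
     kalgebra \<and>
     (\<forall>a. \<Delta> a \<in> T 2) \<and>
     (\<forall>a b. \<Delta> (a + b) = tadd 2 (\<Delta> a) (\<Delta> b)) \<and>
     (\<forall>c a. \<Delta> (sc c a) = tsc 2 c (\<Delta> a)) \<and>
     (\<forall>a b. \<Delta> (a * b) = tmul 2 (\<Delta> a) (\<Delta> b)) \<and>
     \<Delta> 1 = tone 2 \<and>
     (\<forall>a b. \<epsilon> (a + b) = \<epsilon> a + \<epsilon> b) \<and>
     (\<forall>c a. \<epsilon> (sc c a) = c * \<epsilon> a) \<and>
     (\<forall>a b. \<epsilon> (a * b) = \<epsilon> a * \<epsilon> b) \<and>
     \<epsilon> 1 = 1 \<and>
     \<comment> \<open>coassociativity: (Delta (x) id) Delta = (id (x) Delta) Delta\<close>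
     (\<forall>a. cls 3 (flin (rep (\<Delta> a)) (\<lambda>xs. fcat (rep (\<Delta> (xs ! 0))) (bv [xs ! 1])))
        = cls 3 (flin (rep (\<Delta> a)) (\<lambda>xs. fcat (bv [xs ! 0]) (rep (\<Delta> (xs ! 1)))))) \<and>
     \<comment> \<open>counitality: (eps (x) id) Delta = id = (id (x) eps) Delta\<close>
     (\<forall>a. alin (rep (\<Delta> a)) (\<lambda>xs. sc (\<epsilon> (xs ! 0)) (xs ! 1)) = a) \<and>
     (\<forall>a. alin (rep (\<Delta> a)) (\<lambda>xs. sc (\<epsilon> (xs ! 1)) (xs ! 0)) = a)"

definition hopf_antipode :: "('a \<Rightarrow> ('a list \<Rightarrow> 'k) set) \<Rightarrow> ('a \<Rightarrow> 'k) \<Rightarrow> ('a \<Rightarrow> 'a) \<Rightarrow> bool" where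
  "hopf_antipode \<Delta> \<epsilon> S \<longleftrightarrow>
     (\<forall>a b. S (a + b) = S a + S b) \<and>
     (\<forall>c a. S (sc c a) = sc c (S a)) \<and>
     (\<forall>a. alin (rep (\<Delta> a)) (\<lambda>xs. S (xs ! 0) * xs ! 1) = sc (\<epsilon> a) 1) \<and>
     (\<forall>a. alin (rep (\<Delta> a)) (\<lambda>xs. xs ! 0 * S (xs ! 1)) = sc (\<epsilon> a) 1)"

text \<open>A left A(x)A-module: carrier M, addition madd, action mact.  Its k-module structure is the
one induced by k -> A(x)A, c |-> c(1(x)1).\<close>
definition lmod :: "'m set \<Rightarrow> ('m \<Rightarrow> 'm \<Rightarrow> 'm) \<Rightarrow> (('a list \<Rightarrow> 'k) set \<Rightarrow> 'm \<Rightarrow> 'm) \<Rightarrow> bool" where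
  "lmod M madd mact \<longleftrightarrow>
     (\<forall>x\<in>M. \<forall>y\<in>M. madd x y \<in> M) \<and>
     (\<forall>b\<in>T 2. \<forall>x\<in>M. mact b x \<in> M) \<and>
     (\<forall>x\<in>M. \<forall>y\<in>M. \<forall>z\<in>M. madd (madd x y) z = madd x (madd y z)) \<and>
     (\<forall>x\<in>M. \<forall>y\<in>M. madd x y = madd y x) \<and>
     (\<exists>z\<in>M. (\<forall>x\<in>M. madd z x = x) \<and> (\<forall>x\<in>M. \<exists>y\<in>M. madd x y = z)) \<and>
     (\<forall>b\<in>T 2. \<forall>x\<in>M. \<forall>y\<in>M. mact b (madd x y) = madd (mact b x) (mact b y)) \<and>
     (\<forall>b\<in>T 2. \<forall>b'\<in>T 2. \<forall>x\<in>M. mact (tadd 2 b b') x = madd (mact b x) (mact b' x)) \<and>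
     (\<forall>b\<in>T 2. \<forall>b'\<in>T 2. \<forall>x\<in>M. mact (tmul 2 b b') x = mact b (mact b' x)) \<and>
     (\<forall>x\<in>M. mact (tone 2) x = x)"

definition mdual :: "'m set \<Rightarrow> ('m \<Rightarrow> 'm \<Rightarrow> 'm) \<Rightarrow> (('a list \<Rightarrow> 'k) set \<Rightarrow> 'm \<Rightarrow> 'm) \<Rightarrow> ('m \<Rightarrow> 'k) set" where
  "mdual M madd mact = {\<phi>.
     (\<forall>x\<in>M. \<forall>y\<in>M. \<phi> (madd x y) = \<phi> x + \<phi> y) \<and>
     (\<forall>c. \<forall>x\<in>M. \<phi> (mact (tsc 2 c (tone 2)) x) = c * \<phi> x) \<and>
     (\<forall>x. x \<notin> M \<longrightarrow> \<phi> x = 0)}"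

definition dual_act :: "'m set \<Rightarrow> (('a list \<Rightarrow> 'k) set \<Rightarrow> 'm \<Rightarrow> 'm) \<Rightarrow> ('m \<Rightarrow> 'k) \<Rightarrow> ('a list \<Rightarrow> 'k) set \<Rightarrow> 'm \<Rightarrow> 'k" where
  "dual_act M mact \<phi> b = (\<lambda>x. if x \<in> M then \<phi> (mact b x) else 0)"

text \<open>Z' = Hom_A(Delta, eps): right A-module maps from the modulation Delta (= A(x)A with
x.a = x Delta(a)) to the modulation eps (= k with c.a = c eps(a)), extended by 0 off A(x)A,
with right A(x)A-module structure (g b)(u) = g(b u).\<close>
definition Zp :: "('a \<Rightarrow> ('a list \<Rightarrow> 'k) set) \<Rightarrow> ('a \<Rightarrow> 'k) \<Rightarrow> (('a list \<Rightarrow> 'k) set \<Rightarrow> 'k) set" where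
  "Zp \<Delta> \<epsilon> = {g.
     (\<forall>x\<in>T 2. \<forall>y\<in>T 2. g (tadd 2 x y) = g x + g y) \<and>
     (\<forall>c. \<forall>x\<in>T 2. g (tsc 2 c x) = c * g x) \<and>
     (\<forall>x\<in>T 2. \<forall>a. g (tmul 2 x (\<Delta> a)) = g x * \<epsilon> a) \<and>
     (\<forall>x. x \<notin> T 2 \<longrightarrow> g x = 0)}"

definition Zact :: "(('a list \<Rightarrow> 'k) set \<Rightarrow> 'k) \<Rightarrow> ('a list \<Rightarrow> 'k) set \<Rightarrow> ('a list \<Rightarrow> 'k) set \<Rightarrow> 'k" where
  "Zact g b = (\<lambda>u. if u \<in> T 2 then g (tmul 2 b u) else 0)"

definition preantipode :: "('a \<Rightarrow> ('a list \<Rightarrow> 'k) set) \<Rightarrow> ('a \<Rightarrow> 'k) \<Rightarrow>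
    'm set \<Rightarrow> ('m \<Rightarrow> 'm \<Rightarrow> 'm) \<Rightarrow> (('a list \<Rightarrow> 'k) set \<Rightarrow> 'm \<Rightarrow> 'm) \<Rightarrow> bool" where
  "preantipode \<Delta> \<epsilon> M madd mact \<longleftrightarrow>
     lmod M madd mact \<and>
     (\<exists>\<Phi>. bij_betw \<Phi> (mdual M madd mact) (Zp \<Delta> \<epsilon>) \<and>
        (\<forall>\<phi>\<in>mdual M madd mact. \<forall>\<psi>\<in>mdual M madd mact.
            \<Phi> (\<lambda>x. \<phi> x + \<psi> x) = (\<lambda>u. \<Phi> \<phi> u + \<Phi> \<psi> u)) \<and>
        (\<forall>\<phi>\<in>mdual M madd mact. \<forall>b\<in>T 2.
            \<Phi> (dual_act M mact \<phi> b) = Zact (\<Phi> \<phi>) b))"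

definition free_rank_one :: "'m set \<Rightarrow> (('a list \<Rightarrow> 'k) set \<Rightarrow> 'm \<Rightarrow> 'm) \<Rightarrow> bool" where
  "free_rank_one M mact \<longleftrightarrow> (\<exists>g\<in>M. bij_betw (\<lambda>a. mact (tens [a, 1]) g) UNIV M)"

definition hopfish :: "('a \<Rightarrow> ('a list \<Rightarrow> 'k) set) \<Rightarrow> ('a \<Rightarrow> 'k) \<Rightarrow>
    'm set \<Rightarrow> ('m \<Rightarrow> 'm \<Rightarrow> 'm) \<Rightarrow> (('a list \<Rightarrow> 'k) set \<Rightarrow> 'm \<Rightarrow> 'm) \<Rightarrow> bool" where
  "hopfish \<Delta> \<epsilon> M madd mact \<longleftrightarrow> preantipode \<Delta> \<epsilon> M madd mact \<and> free_rank_one M mact"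

definition lideal :: "('a list \<Rightarrow> 'k) set set \<Rightarrow> ('a list \<Rightarrow> 'k) set set" where
  "lideal G = \<Inter>{I. I \<subseteq> T 2 \<and> G \<subseteq> I \<and> tzero 2 \<in> I \<and>
       (\<forall>x\<in>I. \<forall>y\<in>I. tadd 2 x y \<in> I) \<and> (\<forall>x\<in>I. tneg 2 x \<in> I) \<and>
       (\<forall>b\<in>T 2. \<forall>x\<in>I. tmul 2 b x \<in> I)}"

definition Wid :: "('a \<Rightarrow> ('a list \<Rightarrow> 'k) set) \<Rightarrow> ('a \<Rightarrow> 'k) \<Rightarrow> ('a list \<Rightarrow> 'k) set set" where
  "Wid \<Delta> \<epsilon> = lideal {tadd 2 (tsc 2 (\<epsilon> a) (tone 2)) (tneg 2 (\<Delta> a)) | a. True}"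

definition qcls :: "('a list \<Rightarrow> 'k) set set \<Rightarrow> ('a list \<Rightarrow> 'k) set \<Rightarrow> ('a list \<Rightarrow> 'k) set set" where
  "qcls W x = {y \<in> T 2. tadd 2 y (tneg 2 x) \<in> W}"

definition Q :: "('a list \<Rightarrow> 'k) set set \<Rightarrow> ('a list \<Rightarrow> 'k) set set set" where
  "Q W = qcls W ` T 2"

definition qadd :: "('a list \<Rightarrow> 'k) set set \<Rightarrow> ('a list \<Rightarrow> 'k) set set \<Rightarrow> ('a list \<Rightarrow> 'k) set set \<Rightarrow> ('a list \<Rightarrow> 'k) set set" where
  "qadd W p q = qcls W (tadd 2 (rep p) (rep q))"

definition qact :: "('a list \<Rightarrow> 'k) set set \<Rightarrow> ('a list \<Rightarrow> 'k) set \<Rightarrow> ('a list \<Rightarrow> 'k) set set \<Rightarrow> ('a list \<Rightarrow> 'k) set set" where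
  "qact W b q = qcls W (tmul 2 b (rep q))"

definition smod_act :: "('a \<Rightarrow> 'a) \<Rightarrow> ('a list \<Rightarrow> 'k) set \<Rightarrow> 'a \<Rightarrow> 'a" where
  "smod_act S b x = alin (rep b) (\<lambda>xs. xs ! 0 * x * S (xs ! 1))"

end

end

theory Submission
  imports Defs "HOL-Library.Function_Algebras"
begin

text \<open>
  A functional on \<open>(A \<otimes> A)/W\<close> is a functional \<open>g\<close> on \<open>A \<otimes> A\<close> that vanishes on the left
  ideal generated by the elements \<open>\<epsilon>(a)(1 \<otimes> 1) - \<Delta>(a)\<close>, i.e. with \<open>g(x \<Delta>(a)) = g(x) \<epsilon>(a)\<close>
  for all \<open>x\<close>; this is exactly the defining property of \<open>Z'\<close>, and the identification respects
  the right \<open>A \<otimes> A\<close>-actions.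

  If \<open>S\<close> is an antipode, then \<open>x \<otimes> y \<mapsto> x S(y)\<close> kills \<open>W\<close>, because \<open>S\<close> reverses products
  and \<open>\<Sum> a\<^sub>1 S(a\<^sub>2) = \<epsilon>(a) 1\<close>.  Conversely, modulo \<open>W\<close>,
  \<open>1 \<otimes> b = \<Sum> (S(b\<^sub>1) \<otimes> 1) \<Delta>(b\<^sub>2) \<equiv> \<Sum> \<epsilon>(b\<^sub>2) S(b\<^sub>1) \<otimes> 1 = S(b) \<otimes> 1\<close>, so
  \<open>a \<otimes> b \<equiv> a S(b) \<otimes> 1\<close>.  Hence every class has a unique representative \<open>a \<otimes> 1\<close>: the quotient
  is the modulation of \<open>S\<close>, free of rank one over \<open>A\<close>.
\<close>

lemma bv_apply: "bv xs ys = (if ys = xs then 1 else 0)"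
  by (simp add: bv_def)

lemma fsupp_bv [simp]: "fsupp (bv xs :: _ \<Rightarrow> 'k::zero_neq_one) = {xs}"
  by (auto simp: fsupp_def bv_def)

lemma bv_in_free [simp]: "(bv xs :: _ \<Rightarrow> 'k::zero_neq_one) \<in> free n \<longleftrightarrow> length xs = n"
  by (auto simp: free_def)

lemma bv2_in_free: "(bv [a, b] :: _ \<Rightarrow> 'k::zero_neq_one) \<in> free 2"
  by (simp add: numeral_2_eq_2)

lemma freeD:
  "f \<in> free n \<Longrightarrow> finite (fsupp f)"
  "f \<in> free n \<Longrightarrow> xs \<in> fsupp f \<Longrightarrow> length xs = n"
  by (auto simp: free_def)

lemma finite_fsupp_add:
  "finite (fsupp f) \<Longrightarrow> finite (fsupp g) \<Longrightarrow> finite (fsupp (\<lambda>z. f z + (g z :: 'k::comm_ring_1)))"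
  by (rule finite_subset[of _ "fsupp f \<union> fsupp g"]) (auto simp: fsupp_def)

lemma finite_fsupp_smul: "finite (fsupp f) \<Longrightarrow> finite (fsupp (\<lambda>z. c * (f z :: 'k::comm_ring_1)))"
  by (rule finite_subset[of _ "fsupp f"]) (auto simp: fsupp_def)

lemma finite_fsupp_neg: "finite (fsupp f) \<Longrightarrow> finite (fsupp (\<lambda>z. - (f z :: 'k::comm_ring_1)))"
  by (rule finite_subset[of _ "fsupp f"]) (auto simp: fsupp_def)

lemma finite_fsupp_diff:
  "finite (fsupp f) \<Longrightarrow> finite (fsupp g) \<Longrightarrow> finite (fsupp (\<lambda>z. f z - (g z :: 'k::comm_ring_1)))"
  by (rule finite_subset[of _ "fsupp f \<union> fsupp g"]) (auto simp: fsupp_def)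

lemma finite_fsupp_sum:
  "finite I \<Longrightarrow> (\<And>i. i \<in> I \<Longrightarrow> finite (fsupp (g i))) \<Longrightarrow>
   finite (fsupp (\<lambda>z. \<Sum>i\<in>I. (g i z :: 'k::comm_ring_1)))"
proof (induction I rule: finite_induct)
  case empty
  then show ?case by (simp add: fsupp_def)
next
  case (insert x F)
  then show ?case using finite_fsupp_add[of "g x" "\<lambda>z. \<Sum>i\<in>F. g i z"] by simp
qed

lemma finite_fsupp_flin:
  assumes "finite (fsupp f)" and "\<And>xs. xs \<in> fsupp f \<Longrightarrow> finite (fsupp (G xs))"
  shows "finite (fsupp (flin f G))"
  unfolding flin_def using assms by (intro finite_fsupp_sum finite_fsupp_smul)

lemma free_add: "f \<in> free n \<Longrightarrow> g \<in> free n \<Longrightarrow> (\<lambda>z. f z + (g z :: 'k::comm_ring_1)) \<in> free n"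
  unfolding free_def using finite_fsupp_add by (fastforce simp: fsupp_def)

lemma free_smul: "f \<in> free n \<Longrightarrow> (\<lambda>z. (c :: 'k::comm_ring_1) * f z) \<in> free n"
  unfolding free_def using finite_fsupp_smul by (fastforce simp: fsupp_def)

lemma free_neg: "f \<in> free n \<Longrightarrow> (\<lambda>z. - (f z :: 'k::comm_ring_1)) \<in> free n"
  using free_smul[of f n "-1"] by simp

lemma free_diff: "f \<in> free n \<Longrightarrow> g \<in> free n \<Longrightarrow> (\<lambda>z. f z - (g z :: 'k::comm_ring_1)) \<in> free n"
  using free_add[of f n "\<lambda>z. - g z"] free_neg[of g n] by simp

lemma free_zero [simp]: "(\<lambda>z. 0) \<in> free n"
  by (simp add: free_def fsupp_def)

lemma free_sum:
  "finite I \<Longrightarrow> (\<And>i. i \<in> I \<Longrightarrow> g i \<in> free n) \<Longrightarrow> (\<lambda>z. \<Sum>i\<in>I. (g i z :: 'k::comm_ring_1)) \<in> free n"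
proof (induction I rule: finite_induct)
  case empty
  then show ?case by simp
next
  case (insert x F)
  then show ?case using free_add[of "g x" n "\<lambda>z. \<Sum>i\<in>F. g i z"] by simp
qed

lemma free_flin:
  "finite (fsupp f) \<Longrightarrow> (\<And>xs. xs \<in> fsupp f \<Longrightarrow> G xs \<in> free n) \<Longrightarrow> flin f G \<in> free n"
  unfolding flin_def by (rule free_sum) (auto intro: free_smul)

lemma sum_fun_apply: "(\<Sum>i\<in>I. (h i :: 'b \<Rightarrow> 'c::comm_monoid_add)) z = (\<Sum>i\<in>I. h i z)"
  by (induction I rule: infinite_finite_induct) auto

lemma flin_cong: "(\<And>xs. xs \<in> fsupp f \<Longrightarrow> F xs = G xs) \<Longrightarrow> flin f F = flin f G"
  unfolding flin_def by (simp add: fun_eq_iff)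

lemma flin_bv_left [simp]: "flin (bv l) F = F l"
  by (simp add: flin_def bv_apply fun_eq_iff)

lemma flin_bv: "finite (fsupp f) \<Longrightarrow> flin f bv = f"
  by (auto simp: fun_eq_iff flin_def bv_apply fsupp_def if_distrib cong: if_cong)

lemma flin_pairs:
  fixes f g :: "'a list \<Rightarrow> 'k::comm_ring_1"
  shows "(\<lambda>zs. \<Sum>p\<in>fsupp f \<times> fsupp g. if P (fst p) (snd p) = zs then f (fst p) * g (snd p) else 0)
       = flin f (\<lambda>xs. flin g (\<lambda>ys. bv (P xs ys)))"
proof
  fix zs
  have "(\<Sum>p\<in>fsupp f \<times> fsupp g. if P (fst p) (snd p) = zs then f (fst p) * g (snd p) else 0)
      = (\<Sum>xs\<in>fsupp f. \<Sum>ys\<in>fsupp g. if P xs ys = zs then f xs * g ys else 0)"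
    by (simp add: sum.cartesian_product split_beta)
  also have "\<dots> = (\<Sum>xs\<in>fsupp f. f xs * (\<Sum>ys\<in>fsupp g. g ys * bv (P xs ys) zs))"
    by (simp add: sum_distrib_left bv_apply eq_commute) (intro sum.cong refl, auto)
  finally show "(\<Sum>p\<in>fsupp f \<times> fsupp g. if P (fst p) (snd p) = zs then f (fst p) * g (snd p) else 0)
      = flin f (\<lambda>xs. flin g (\<lambda>ys. bv (P xs ys))) zs"
    by (simp add: flin_def)
qed

lemma fmul_eq_flin: "fmul f g = flin f (\<lambda>xs. flin g (\<lambda>ys. bv (map2 (*) xs ys)))"
  unfolding fmul_def by (rule flin_pairs)

lemma fcat_eq_flin: "fcat f g = flin f (\<lambda>xs. flin g (\<lambda>ys. bv (xs @ ys)))"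
  unfolding fcat_def by (rule flin_pairs)

lemma length2_conv: "length zs = 2 \<Longrightarrow> zs = [zs!0, zs!1]"
  by (cases zs; cases "tl zs"; auto)

lemma less2_cases: "i < (2::nat) \<longleftrightarrow> i = 0 \<or> i = 1"
  by auto

lemma less3_cases: "i < (3::nat) \<longleftrightarrow> i = 0 \<or> i = 1 \<or> i = 2"
  by auto

lemma map2_mult_assoc:
  "map2 (*) (map2 (*) xs ys) vs = map2 (*) xs (map2 (*) ys (vs :: 'a::semigroup_mult list))"
proof (induction xs arbitrary: ys vs)
  case Nil
  then show ?case by simp
next
  case (Cons x xs)
  then show ?case by (cases ys; cases vs) (auto simp: mult.assoc)
qed

lemma map2_update_left: "map2 f (xs[i := x]) ys = (map2 f xs ys)[i := f x (ys ! i)]"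
  using zip_update[of xs i x ys "ys ! i"] by (simp add: map_update)

lemma map2_update_right: "map2 f xs (ys[i := y]) = (map2 f xs ys)[i := f (xs ! i) y]"
  using zip_update[of xs i "xs ! i" ys y] by (simp add: map_update)

definition k_linear ::
  "('k::comm_ring_1 \<Rightarrow> 'a \<Rightarrow> 'a) \<Rightarrow> ('k \<Rightarrow> 'v \<Rightarrow> 'v) \<Rightarrow> ('a::ab_group_add \<Rightarrow> 'v::ab_group_add) \<Rightarrow> bool"
  where "k_linear s t h \<longleftrightarrow> (\<forall>x y. h (x + y) = h x + h y) \<and> (\<forall>c x. h (s c x) = t c (h x))"

section \<open>Tensor powers as classes of free modules\<close>

context kctx
begin

lemma relgens_in_rel: "g \<in> relgens n \<Longrightarrow> g \<in> rel n"
  unfolding rel_def by (rule CollectI, rule exI[of _ "{g}"], rule exI[of _ "\<lambda>_. 1"]) auto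

lemma rel_zero: "(\<lambda>_. 0) \<in> rel n"
  unfolding rel_def by (rule CollectI, rule exI[of _ "{}"]) auto

lemma rel_add:
  assumes "f \<in> rel n" and "g \<in> rel n"
  shows "(\<lambda>z. f z + g z) \<in> rel n"
proof -
  obtain t r where t: "finite t" "t \<subseteq> relgens n" "f = (\<lambda>zs. \<Sum>h\<in>t. r h * h zs)"
    using assms(1) unfolding rel_def by blast
  obtain t' r' where t': "finite t'" "t' \<subseteq> relgens n" "g = (\<lambda>zs. \<Sum>h\<in>t'. r' h * h zs)"
    using assms(2) unfolding rel_def by blast
  define r2 where "r2 h = (if h \<in> t then r h else 0) + (if h \<in> t' then r' h else 0)" for h
  have "(\<lambda>z. f z + g z) = (\<lambda>zs. \<Sum>h\<in>t \<union> t'. r2 h * h zs)"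
  proof
    fix zs
    have "(\<Sum>h\<in>t \<union> t'. r2 h * h zs) = (\<Sum>h\<in>t \<union> t'. (if h \<in> t then r h * h zs else 0))
        + (\<Sum>h\<in>t \<union> t'. (if h \<in> t' then r' h * h zs else 0))"
      unfolding r2_def sum.distrib[symmetric] by (rule sum.cong) (auto simp: distrib_right)
    also have "\<dots> = (\<Sum>h\<in>t. r h * h zs) + (\<Sum>h\<in>t'. r' h * h zs)"
      using t t' by (simp add: sum.If_cases Int_absorb1)
    finally show "f zs + g zs = (\<Sum>h\<in>t \<union> t'. r2 h * h zs)" using t t' by simp
  qed
  then show ?thesis unfolding rel_def using t t' by blast
qed

lemma rel_smul:
  assumes "f \<in> rel n"
  shows "(\<lambda>z. c * f z) \<in> rel n"
proof -
  obtain t r where t: "finite t" "t \<subseteq> relgens n" "f = (\<lambda>zs. \<Sum>g\<in>t. r g * g zs)"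
    using assms unfolding rel_def by blast
  have "(\<lambda>z. c * f z) = (\<lambda>zs. \<Sum>g\<in>t. (c * r g) * g zs)"
    unfolding t(3) by (simp add: sum_distrib_left mult.assoc)
  then show ?thesis unfolding rel_def using t(1,2)
    by (intro CollectI exI[of _ t] exI[of _ "\<lambda>g. c * r g"]) simp
qed

lemma rel_neg: "f \<in> rel n \<Longrightarrow> (\<lambda>z. - f z) \<in> rel n"
  using rel_smul[of f n "-1"] by simp

lemma rel_update_add:
  assumes "j < length l"
  shows "(\<lambda>z. bv (l[j := a + b]) z - bv (l[j := a]) z - bv (l[j := b]) z) \<in> rel (length l)"
proof (rule relgens_in_rel)
  show "(\<lambda>z. bv (l[j := a + b]) z - bv (l[j := a]) z - bv (l[j := b]) z) \<in> relgens (length l)"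
    unfolding relgens_def using assms
    by (intro UnI1 CollectI exI[of _ "take j l"] exI[of _ a] exI[of _ b] exI[of _ "drop (Suc j) l"])
      (simp add: upd_conv_take_nth_drop)
qed

lemma rel_update_sc:
  assumes "j < length l"
  shows "(\<lambda>z. bv (l[j := sc c a]) z - c * bv (l[j := a]) z) \<in> rel (length l)"
proof (rule relgens_in_rel)
  show "(\<lambda>z. bv (l[j := sc c a]) z - c * bv (l[j := a]) z) \<in> relgens (length l)"
    unfolding relgens_def using assms
    by (intro UnI2 CollectI exI[of _ "take j l"] exI[of _ c] exI[of _ a] exI[of _ "drop (Suc j) l"])
      (simp add: upd_conv_take_nth_drop)
qed

definition rel_equiv :: "nat \<Rightarrow> ('a list \<Rightarrow> 'k) \<Rightarrow> ('a list \<Rightarrow> 'k) \<Rightarrow> bool" where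
  "rel_equiv n f g \<longleftrightarrow> (\<lambda>z. f z - g z) \<in> rel n"

lemma rel_equiv_refl [simp]: "rel_equiv n f f"
  by (simp add: rel_equiv_def rel_zero)

lemma rel_equiv_sym: "rel_equiv n f g \<Longrightarrow> rel_equiv n g f"
  unfolding rel_equiv_def using rel_neg[of "\<lambda>z. f z - g z" n] by simp

lemma rel_equiv_trans [trans]: "rel_equiv n f g \<Longrightarrow> rel_equiv n g h \<Longrightarrow> rel_equiv n f h"
  unfolding rel_equiv_def using rel_add[of "\<lambda>z. f z - g z" n "\<lambda>z. g z - h z"] by simp

lemma rel_equiv_eq_trans [trans]: "rel_equiv n f g \<Longrightarrow> g = h \<Longrightarrow> rel_equiv n f h"
  by simp

lemma eq_rel_equiv_trans [trans]: "f = g \<Longrightarrow> rel_equiv n g h \<Longrightarrow> rel_equiv n f h"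
  by simp

lemma rel_equiv_add:
  "rel_equiv n f g \<Longrightarrow> rel_equiv n f' g' \<Longrightarrow> rel_equiv n (\<lambda>z. f z + f' z) (\<lambda>z. g z + g' z)"
  unfolding rel_equiv_def using rel_add[of "\<lambda>z. f z - g z" n "\<lambda>z. f' z - g' z"]
  by (simp add: algebra_simps)

lemma rel_equiv_smul: "rel_equiv n f g \<Longrightarrow> rel_equiv n (\<lambda>z. c * f z) (\<lambda>z. c * g z)"
  unfolding rel_equiv_def using rel_smul[of "\<lambda>z. f z - g z" n c] by (simp add: algebra_simps)

lemma rel_equiv_neg: "rel_equiv n f g \<Longrightarrow> rel_equiv n (\<lambda>z. - f z) (\<lambda>z. - g z)"
  using rel_equiv_smul[of n f g "-1"] by simp

lemma cls_self: "f \<in> free n \<Longrightarrow> f \<in> cls n f"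
  by (simp add: cls_def rel_zero)

lemma cls_eq_iff:
  assumes "f \<in> free n" and "g \<in> free n"
  shows "cls n f = cls n g \<longleftrightarrow> rel_equiv n f g"
proof
  assume "cls n f = cls n g"
  then have "f \<in> cls n g" using cls_self[OF assms(1)] by simp
  then show "rel_equiv n f g" by (simp add: cls_def rel_equiv_def)
next
  assume e: "rel_equiv n f g"
  have "rel_equiv n h f \<longleftrightarrow> rel_equiv n h g" for h
    using rel_equiv_trans[OF _ e] rel_equiv_trans[OF _ rel_equiv_sym[OF e]] by blast
  then show "cls n f = cls n g" by (simp add: cls_def rel_equiv_def)
qed

lemma cls_eqI: "f \<in> free n \<Longrightarrow> g \<in> free n \<Longrightarrow> rel_equiv n f g \<Longrightarrow> cls n f = cls n g"
  using cls_eq_iff by blast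

lemma rep_cls:
  assumes "f \<in> free n"
  shows "rep (cls n f) \<in> free n" and "rel_equiv n (rep (cls n f)) f"
proof -
  have "rep (cls n f) \<in> cls n f"
    unfolding rep_def using cls_self[OF assms] by (rule someI[where P = "\<lambda>g. g \<in> cls n f"])
  then show "rep (cls n f) \<in> free n" and "rel_equiv n (rep (cls n f)) f"
    by (auto simp: cls_def rel_equiv_def)
qed

lemma cls_in_T: "f \<in> free n \<Longrightarrow> cls n f \<in> T n"
  by (simp add: T_def)

lemma T_rep:
  assumes "X \<in> T n"
  shows "rep X \<in> free n" and "cls n (rep X) = X"
proof -
  obtain f where f: "f \<in> free n" "X = cls n f" using assms by (auto simp: T_def)
  then show "rep X \<in> free n" using rep_cls by auto
  show "cls n (rep X) = X" using f rep_cls cls_eqI by metis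
qed

lemma T_cases:
  assumes "X \<in> T n"
  obtains f where "f \<in> free n" and "X = cls n f"
  using assms by (auto simp: T_def)

lemma tens2_eq_cls: "tens [a, b] = cls 2 (bv [a, b])"
  by (simp add: tens_def numeral_2_eq_2)

lemma tone2_eq_cls: "tone 2 = cls 2 (bv [1, 1])"
  by (simp add: tone_def tens_def numeral_2_eq_2)

lemma tadd_cls: "f \<in> free n \<Longrightarrow> g \<in> free n \<Longrightarrow> tadd n (cls n f) (cls n g) = cls n (\<lambda>z. f z + g z)"
  unfolding tadd_def by (intro cls_eqI free_add rep_cls rel_equiv_add)

lemma tneg_cls: "f \<in> free n \<Longrightarrow> tneg n (cls n f) = cls n (\<lambda>z. - f z)"
  unfolding tneg_def by (intro cls_eqI free_neg rep_cls rel_equiv_neg)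

lemma tsc_cls: "f \<in> free n \<Longrightarrow> tsc n c (cls n f) = cls n (\<lambda>z. c * f z)"
  unfolding tsc_def by (intro cls_eqI free_smul rep_cls rel_equiv_smul)

lemma bv2_add_left: "rel_equiv 2 (bv [a + b, w]) (\<lambda>z. bv [a, w] z + bv [b, w] z)"
  using rel_update_add[of 0 "[a, w]" a b] by (simp add: rel_equiv_def diff_diff_eq numeral_2_eq_2)

lemma bv2_add_right: "rel_equiv 2 (bv [w, a + b]) (\<lambda>z. bv [w, a] z + bv [w, b] z)"
  using rel_update_add[of 1 "[w, a]" a b] by (simp add: rel_equiv_def diff_diff_eq numeral_2_eq_2)

lemma bv2_sc_left: "rel_equiv 2 (bv [sc c a, w]) (\<lambda>z. c * bv [a, w] z)"
  using rel_update_sc[of 0 "[a, w]" c a] by (simp add: rel_equiv_def numeral_2_eq_2)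

lemma bv2_sc_right: "rel_equiv 2 (bv [w, sc c a]) (\<lambda>z. c * bv [w, a] z)"
  using rel_update_sc[of 1 "[w, a]" c a] by (simp add: rel_equiv_def numeral_2_eq_2)

lemma bv2_zero_left: "rel_equiv 2 (bv [0, w]) (\<lambda>_. 0)"
  using rel_neg[of "\<lambda>z. - bv [0, w] z" 2] bv2_add_left[of 0 0 w] by (simp add: rel_equiv_def)

lemma bv2_zero_right: "rel_equiv 2 (bv [w, 0]) (\<lambda>_. 0)"
  using rel_neg[of "\<lambda>z. - bv [w, 0] z" 2] bv2_add_right[of w 0 0] by (simp add: rel_equiv_def)

lemma sum_bv2_left:
  "finite B \<Longrightarrow> rel_equiv 2 (\<lambda>z. \<Sum>xs\<in>B. g xs * bv [H xs, w] z) (bv [\<Sum>xs\<in>B. sc (g xs) (H xs), w])"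
proof (induction B rule: finite_induct)
  case empty
  then show ?case using rel_equiv_sym[OF bv2_zero_left] by simp
next
  case (insert x B)
  have "rel_equiv 2 (\<lambda>z. \<Sum>xs\<in>insert x B. g xs * bv [H xs, w] z)
      (\<lambda>z. g x * bv [H x, w] z + (\<Sum>xs\<in>B. g xs * bv [H xs, w] z))"
    using insert by simp
  also have "rel_equiv 2 \<dots> (\<lambda>z. bv [sc (g x) (H x), w] z + bv [\<Sum>xs\<in>B. sc (g xs) (H xs), w] z)"
    by (intro rel_equiv_add rel_equiv_sym[OF bv2_sc_left] insert.IH)
  also have "rel_equiv 2 \<dots> (bv [sc (g x) (H x) + (\<Sum>xs\<in>B. sc (g xs) (H xs)), w])"
    by (rule rel_equiv_sym[OF bv2_add_left])
  finally show ?case using insert by simp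
qed

lemma sum_bv2_right:
  "finite B \<Longrightarrow> rel_equiv 2 (\<lambda>z. \<Sum>xs\<in>B. g xs * bv [w, H xs] z) (bv [w, \<Sum>xs\<in>B. sc (g xs) (H xs)])"
proof (induction B rule: finite_induct)
  case empty
  then show ?case using rel_equiv_sym[OF bv2_zero_right] by simp
next
  case (insert x B)
  have "rel_equiv 2 (\<lambda>z. \<Sum>xs\<in>insert x B. g xs * bv [w, H xs] z)
      (\<lambda>z. g x * bv [w, H x] z + (\<Sum>xs\<in>B. g xs * bv [w, H xs] z))"
    using insert by simp
  also have "rel_equiv 2 \<dots> (\<lambda>z. bv [w, sc (g x) (H x)] z + bv [w, \<Sum>xs\<in>B. sc (g xs) (H xs)] z)"
    by (intro rel_equiv_add rel_equiv_sym[OF bv2_sc_right] insert.IH)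
  also have "rel_equiv 2 \<dots> (bv [w, sc (g x) (H x) + (\<Sum>xs\<in>B. sc (g xs) (H xs))])"
    by (rule rel_equiv_sym[OF bv2_add_right])
  finally show ?case using insert by simp
qed

end

section \<open>Linear extension of maps on pure tensors\<close>

text \<open>A map that is multilinear modulo a submodule \<open>R\<close> sends the multilinearity relations
into \<open>R\<close>; this is how maps are shown to be well defined on tensor powers,
both for \<open>R = {0}\<close> (values in \<open>A\<close>) and for \<open>R = rel 2\<close> (values in \<open>A \<otimes> A\<close>).\<close>

locale lin_ext = kctx sc for sc :: "'k::comm_ring_1 \<Rightarrow> 'a::ring_1 \<Rightarrow> 'a" +
  fixes smul :: "'k \<Rightarrow> 'v::ab_group_add \<Rightarrow> 'v" and R :: "'v set"
  assumes smul_add_right: "smul c (x + y) = smul c x + smul c y"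
    and smul_add_left: "smul (c + d) x = smul c x + smul d x"
    and smul_mult: "smul (c * d) x = smul c (smul d x)"
    and smul_one [simp]: "smul 1 x = x"
    and R_zero: "0 \<in> R"
    and R_add: "x \<in> R \<Longrightarrow> y \<in> R \<Longrightarrow> x + y \<in> R"
    and R_smul: "x \<in> R \<Longrightarrow> smul c x \<in> R"
begin

lemma smul_zero_left [simp]: "smul 0 x = 0"
  using smul_add_left[of 0 0 x] by simp

lemma smul_zero_right [simp]: "smul c 0 = 0"
  using smul_add_right[of c 0 0] by simp

lemma smul_neg_right: "smul c (- x) = - smul c x"
  using smul_add_right[of c x "- x"] by (simp add: eq_neg_iff_add_eq_0 add.commute)

lemma smul_neg_left: "smul (- c) x = - smul c x"
  using smul_add_left[of c "- c" x] by (simp add: eq_neg_iff_add_eq_0 add.commute)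

lemma smul_diff_right: "smul c (x - y) = smul c x - smul c y"
  using smul_add_right[of c x "- y"] by (simp add: smul_neg_right)

lemma smul_commute: "smul c (smul d x) = smul d (smul c x)"
  by (metis smul_mult mult.commute)

lemma smul_sum_right: "smul c (\<Sum>i\<in>I. h i) = (\<Sum>i\<in>I. smul c (h i))"
  by (induction I rule: infinite_finite_induct) (auto simp: smul_add_right)

lemma R_sum: "(\<And>i. i \<in> I \<Longrightarrow> h i \<in> R) \<Longrightarrow> (\<Sum>i\<in>I. h i) \<in> R"
  by (induction I rule: infinite_finite_induct) (auto simp: R_zero R_add)

definition lext :: "('a list \<Rightarrow> 'k) \<Rightarrow> ('a list \<Rightarrow> 'v) \<Rightarrow> 'v" where
  "lext f F = (\<Sum>xs\<in>fsupp f. smul (f xs) (F xs))"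

definition multilinear_mod :: "nat \<Rightarrow> ('a list \<Rightarrow> 'v) \<Rightarrow> bool" where
  "multilinear_mod n F \<longleftrightarrow>
    (\<forall>zs i a b. length zs = n \<longrightarrow> i < n \<longrightarrow>
       F (zs[i := a + b]) - F (zs[i := a]) - F (zs[i := b]) \<in> R) \<and>
    (\<forall>zs i c a. length zs = n \<longrightarrow> i < n \<longrightarrow> F (zs[i := sc c a]) - smul c (F (zs[i := a])) \<in> R)"

lemma lext_superset: "finite B \<Longrightarrow> fsupp f \<subseteq> B \<Longrightarrow> lext f F = (\<Sum>xs\<in>B. smul (f xs) (F xs))"
  unfolding lext_def by (rule sum.mono_neutral_left) (auto simp: fsupp_def)

lemma lext_add:
  assumes "finite (fsupp f)" and "finite (fsupp g)"
  shows "lext (\<lambda>z. f z + g z) F = lext f F + lext g F"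
proof -
  let ?B = "fsupp f \<union> fsupp g"
  have "lext (\<lambda>z. f z + g z) F = (\<Sum>xs\<in>?B. smul (f xs + g xs) (F xs))"
    by (rule lext_superset) (use assms in \<open>auto simp: fsupp_def\<close>)
  also have "\<dots> = (\<Sum>xs\<in>?B. smul (f xs) (F xs)) + (\<Sum>xs\<in>?B. smul (g xs) (F xs))"
    by (simp add: smul_add_left sum.distrib)
  also have "\<dots> = lext f F + lext g F"
    using assms by (simp add: lext_superset[of ?B f] lext_superset[of ?B g])
  finally show ?thesis .
qed

lemma lext_smul:
  assumes "finite (fsupp f)"
  shows "lext (\<lambda>z. c * f z) F = smul c (lext f F)"
proof -
  have "lext (\<lambda>z. c * f z) F = (\<Sum>xs\<in>fsupp f. smul (c * f xs) (F xs))"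
    by (rule lext_superset) (use assms in \<open>auto simp: fsupp_def\<close>)
  then show ?thesis by (simp add: lext_def smul_mult smul_sum_right)
qed

lemma lext_neg: "finite (fsupp f) \<Longrightarrow> lext (\<lambda>z. - f z) F = - lext f F"
  using lext_smul[of f "-1" F] by (simp add: smul_neg_left)

lemma lext_diff:
  "finite (fsupp f) \<Longrightarrow> finite (fsupp g) \<Longrightarrow> lext (\<lambda>z. f z - g z) F = lext f F - lext g F"
  using lext_add[of f "\<lambda>z. - g z" F] lext_neg[of g F] finite_fsupp_neg[of g] by simp

lemma lext_bv [simp]: "lext (bv l) F = F l"
  by (simp add: lext_def bv_apply)

lemma lext_cong: "(\<And>xs. xs \<in> fsupp f \<Longrightarrow> F xs = G xs) \<Longrightarrow> lext f F = lext f G"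
  unfolding lext_def by simp

lemma lext_fun_add: "lext f (\<lambda>xs. F xs + G xs) = lext f F + lext f G"
  unfolding lext_def by (simp add: smul_add_right sum.distrib)

lemma lext_fun_smul: "lext f (\<lambda>xs. smul c (F xs)) = smul c (lext f F)"
  unfolding lext_def by (simp add: smul_commute smul_sum_right)

lemma lext_fun_diff: "lext f (\<lambda>xs. F xs - G xs) = lext f F - lext f G"
  unfolding lext_def by (simp add: smul_diff_right sum_subtractf)

lemma lext_in_R: "(\<And>xs. xs \<in> fsupp f \<Longrightarrow> F xs \<in> R) \<Longrightarrow> lext f F \<in> R"
  unfolding lext_def by (rule R_sum) (simp add: R_smul)

lemma lext_swap: "lext f (\<lambda>xs. lext g (\<lambda>ys. H xs ys)) = lext g (\<lambda>ys. lext f (\<lambda>xs. H xs ys))"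
  unfolding lext_def by (simp add: smul_sum_right sum.swap[of _ "fsupp f"] smul_commute)

lemma lext_sum:
  "finite I \<Longrightarrow> (\<And>i. i \<in> I \<Longrightarrow> finite (fsupp (g i))) \<Longrightarrow>
   lext (\<lambda>z. \<Sum>i\<in>I. g i z) F = (\<Sum>i\<in>I. lext (g i) F)"
proof (induction I rule: finite_induct)
  case empty
  then show ?case by (simp add: lext_def fsupp_def)
next
  case (insert x I)
  then have "lext (\<lambda>z. \<Sum>i\<in>insert x I. g i z) F = lext (\<lambda>z. g x z + (\<Sum>i\<in>I. g i z)) F"
    by simp
  also have "\<dots> = lext (g x) F + lext (\<lambda>z. \<Sum>i\<in>I. g i z) F"
    using insert by (intro lext_add finite_fsupp_sum) auto
  finally show ?case using insert by simp
qed

lemma lext_flin: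
  assumes "finite (fsupp f)" and "\<And>xs. xs \<in> fsupp f \<Longrightarrow> finite (fsupp (G xs))"
  shows "lext (flin f G) F = lext f (\<lambda>xs. lext (G xs) F)"
proof -
  have "lext (flin f G) F = (\<Sum>xs\<in>fsupp f. lext (\<lambda>z. f xs * G xs z) F)"
    unfolding flin_def using assms by (intro lext_sum finite_fsupp_smul) auto
  also have "\<dots> = (\<Sum>xs\<in>fsupp f. smul (f xs) (lext (G xs) F))"
    using assms by (intro sum.cong lext_smul) auto
  finally show ?thesis by (simp add: lext_def)
qed

lemma lext_flin2:
  assumes "finite (fsupp f)" and "finite (fsupp g)"
  shows "lext (flin f (\<lambda>xs. flin g (\<lambda>ys. bv (P xs ys)))) F = lext f (\<lambda>xs. lext g (\<lambda>ys. F (P xs ys)))"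
proof -
  have "lext (flin f (\<lambda>xs. flin g (\<lambda>ys. bv (P xs ys)))) F
      = lext f (\<lambda>xs. lext (flin g (\<lambda>ys. bv (P xs ys))) F)"
    using assms by (intro lext_flin finite_fsupp_flin) auto
  also have "\<dots> = lext f (\<lambda>xs. lext g (\<lambda>ys. lext (bv (P xs ys)) F))"
    using assms by (intro lext_cong lext_flin) auto
  finally show ?thesis by simp
qed

lemma lext_fmul:
  "finite (fsupp f) \<Longrightarrow> finite (fsupp g) \<Longrightarrow>
   lext (fmul f g) F = lext f (\<lambda>xs. lext g (\<lambda>ys. F (map2 (*) xs ys)))"
  unfolding fmul_eq_flin by (rule lext_flin2)

lemma lext_fcat:
  "finite (fsupp f) \<Longrightarrow> finite (fsupp g) \<Longrightarrow>
   lext (fcat f g) F = lext f (\<lambda>xs. lext g (\<lambda>ys. F (xs @ ys)))"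
  unfolding fcat_eq_flin by (rule lext_flin2)

lemma finite_fsupp_relgens: "g \<in> relgens n \<Longrightarrow> finite (fsupp g)"
  unfolding relgens_def by (auto intro!: finite_fsupp_diff finite_fsupp_smul simp del: append.simps)

lemma lext_relgens:
  assumes g: "g \<in> relgens n" and F: "multilinear_mod n F"
  shows "lext g F \<in> R"
  using g unfolding relgens_def
proof (elim UnE CollectE exE conjE)
  fix xs a b ys
  assume g: "g = (\<lambda>zs. bv (xs @ [a + b] @ ys) zs - bv (xs @ [a] @ ys) zs - bv (xs @ [b] @ ys) zs)"
    and l: "length xs + length ys + 1 = n"
  have "lext g F = F (xs @ [a + b] @ ys) - F (xs @ [a] @ ys) - F (xs @ [b] @ ys)"
    unfolding g by (simp add: lext_diff finite_fsupp_diff)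
  also have "\<dots> \<in> R"
    using F l unfolding multilinear_mod_def
    by (auto elim!: allE[of _ "xs @ [a] @ ys"] allE[of _ "length xs"] simp: list_update_append)
  finally show ?thesis .
next
  fix xs c a ys
  assume g: "g = (\<lambda>zs. bv (xs @ [sc c a] @ ys) zs - c * bv (xs @ [a] @ ys) zs)"
    and l: "length xs + length ys + 1 = n"
  have "lext g F = F (xs @ [sc c a] @ ys) - smul c (F (xs @ [a] @ ys))"
    unfolding g by (simp add: lext_diff lext_smul finite_fsupp_smul)
  also have "\<dots> \<in> R"
    using F l unfolding multilinear_mod_def
    by (auto elim!: allE[of _ "xs @ [a] @ ys"] allE[of _ "length xs"] simp: list_update_append)
  finally show ?thesis .
qed

lemma lext_rel:
  assumes f: "f \<in> rel n" and F: "multilinear_mod n F"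
  shows "lext f F \<in> R"
proof -
  obtain t r where t: "finite t" "t \<subseteq> relgens n" "f = (\<lambda>zs. \<Sum>g\<in>t. r g * g zs)"
    using f unfolding rel_def by blast
  have "lext f F = (\<Sum>g\<in>t. lext (\<lambda>z. r g * g z) F)"
    unfolding t(3) using t finite_fsupp_relgens by (intro lext_sum finite_fsupp_smul) auto
  also have "\<dots> = (\<Sum>g\<in>t. smul (r g) (lext g F))"
    using t finite_fsupp_relgens by (intro sum.cong lext_smul) auto
  also have "\<dots> \<in> R"
    using t lext_relgens F by (intro R_sum R_smul) auto
  finally show ?thesis .
qed

lemma lext_rel_equiv:
  assumes "rel_equiv n f g" "finite (fsupp f)" "finite (fsupp g)" "multilinear_mod n F"
  shows "lext f F - lext g F \<in> R"
  using lext_rel[of "\<lambda>z. f z - g z" n F] assms lext_diff by (simp add: rel_equiv_def)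

lemma multilinear_modI:
  "(\<And>zs i. length zs = n \<Longrightarrow> i < n \<Longrightarrow> k_linear sc smul (\<lambda>x. F (zs[i := x]))) \<Longrightarrow> multilinear_mod n F"
  unfolding multilinear_mod_def k_linear_def by (auto simp: R_zero)

lemma multilinear_mod_lext:
  assumes "\<And>ys. ys \<in> fsupp g \<Longrightarrow> multilinear_mod n (\<lambda>xs. H xs ys)"
  shows "multilinear_mod n (\<lambda>xs. lext g (H xs))"
  unfolding multilinear_mod_def
proof (intro conjI allI impI)
  fix zs :: "'a list" and i a b
  assume l: "length zs = n" "i < n"
  have "lext g (H (zs[i := a + b])) - lext g (H (zs[i := a])) - lext g (H (zs[i := b]))
      = lext g (\<lambda>ys. H (zs[i := a + b]) ys - H (zs[i := a]) ys - H (zs[i := b]) ys)"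
    by (simp add: lext_fun_diff)
  also have "\<dots> \<in> R"
    using assms l by (intro lext_in_R) (auto simp: multilinear_mod_def)
  finally show "lext g (H (zs[i := a + b])) - lext g (H (zs[i := a])) - lext g (H (zs[i := b])) \<in> R" .
next
  fix zs :: "'a list" and i c a
  assume l: "length zs = n" "i < n"
  have "lext g (H (zs[i := sc c a])) - smul c (lext g (H (zs[i := a])))
      = lext g (\<lambda>ys. H (zs[i := sc c a]) ys - smul c (H (zs[i := a]) ys))"
    by (simp add: lext_fun_diff lext_fun_smul)
  also have "\<dots> \<in> R"
    using assms l by (intro lext_in_R) (auto simp: multilinear_mod_def)
  finally show "lext g (H (zs[i := sc c a])) - smul c (lext g (H (zs[i := a]))) \<in> R" .
qed

lemma lext_coassoc:
  assumes B: "bialgebra \<Delta> \<epsilon>" and ml: "multilinear_mod 3 G"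
  shows "lext (rep (\<Delta> a)) (\<lambda>xs. lext (rep (\<Delta> (xs!0))) (\<lambda>zs. G [zs!0, zs!1, xs!1]))
       - lext (rep (\<Delta> a)) (\<lambda>xs. lext (rep (\<Delta> (xs!1))) (\<lambda>zs. G [xs!0, zs!0, zs!1])) \<in> R"
proof -
  have DT: "rep (\<Delta> u) \<in> free 2" for u
    using B T_rep(1) by (simp add: bialgebra_def)
  then have fin: "finite (fsupp (rep (\<Delta> u)))" and len: "zs \<in> fsupp (rep (\<Delta> u)) \<Longrightarrow> length zs = 2"
    for u zs using freeD by blast+
  define A1 where "A1 = flin (rep (\<Delta> a)) (\<lambda>xs. fcat (rep (\<Delta> (xs!0))) (bv [xs!1]))"
  define A2 where "A2 = flin (rep (\<Delta> a)) (\<lambda>xs. fcat (bv [xs!0]) (rep (\<Delta> (xs!1))))"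
  have fcat1: "fcat (rep (\<Delta> u)) (bv [v]) = flin (rep (\<Delta> u)) (\<lambda>zs. bv (zs @ [v]))" for u v
    by (simp add: fcat_eq_flin)
  have fcat2: "fcat (bv [v]) (rep (\<Delta> u)) = flin (rep (\<Delta> u)) (\<lambda>zs. bv (v # zs))" for u v
    by (simp add: fcat_eq_flin)
  have "fcat (rep (\<Delta> u)) (bv [v]) \<in> free 3" "fcat (bv [v]) (rep (\<Delta> u)) \<in> free 3" for u v
    unfolding fcat1 fcat2 using fin by (auto intro!: free_flin dest!: len)
  then have free: "A1 \<in> free 3" "A2 \<in> free 3"
    unfolding A1_def A2_def using fin by (auto intro: free_flin)
  have "cls 3 A1 = cls 3 A2"
    using B unfolding A1_def A2_def by (simp add: bialgebra_def)
  then have "lext A1 G - lext A2 G \<in> R"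
    using free ml by (intro lext_rel_equiv) (auto simp: cls_eq_iff dest: freeD)
  moreover have "lext A1 G = lext (rep (\<Delta> a)) (\<lambda>xs. lext (rep (\<Delta> (xs!0))) (\<lambda>zs. G (zs @ [xs!1])))"
    unfolding A1_def using fin free by (simp add: lext_flin lext_fcat freeD(1) finite_fsupp_flin fcat_eq_flin)
  moreover have "lext A2 G = lext (rep (\<Delta> a)) (\<lambda>xs. lext (rep (\<Delta> (xs!1))) (\<lambda>zs. G (xs!0 # zs)))"
    unfolding A2_def using fin free by (simp add: lext_flin lext_fcat freeD(1) finite_fsupp_flin fcat_eq_flin)
  ultimately show ?thesis
    by (smt (verit) len length2_conv lext_cong append_Cons append_Nil)
qed

end

sublocale kctx \<subseteq> free2: lin_ext sc "\<lambda>c (g :: 'a list \<Rightarrow> 'k) zs. c * g zs" "rel 2"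
  rewrites "lin_ext.lext (\<lambda>c (g :: 'a list \<Rightarrow> 'k) zs. c * g zs) = flin"
proof -
  show "lin_ext (\<lambda>c (g :: 'a list \<Rightarrow> 'k) zs. c * g zs) (rel 2)"
    by unfold_locales (auto simp: fun_eq_iff algebra_simps zero_fun_def plus_fun_def rel_zero
        intro: rel_add[unfolded plus_fun_def] rel_smul)
  then show "lin_ext.lext (\<lambda>c (g :: 'a list \<Rightarrow> 'k) zs. c * g zs) = flin"
    by (simp add: lin_ext.lext_def flin_def fun_eq_iff sum_fun_apply)
qed

context kctx
begin

lemma diff_in_rel_iff: "A - B \<in> rel 2 \<longleftrightarrow> rel_equiv 2 A B"
  by (simp add: rel_equiv_def fun_diff_def)

lemma flin_rel_equiv:
  assumes "rel_equiv n f g" "finite (fsupp f)" "finite (fsupp g)" "free2.multilinear_mod n F"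
  shows "rel_equiv 2 (flin f F) (flin g F)"
  using free2.lext_rel_equiv[OF assms] by (simp add: diff_in_rel_iff)

lemma flin_cong_rel_equiv:
  fixes f :: "'a list \<Rightarrow> 'k"
  assumes "\<And>xs. xs \<in> fsupp f \<Longrightarrow> rel_equiv 2 (A xs) (B xs)"
  shows "rel_equiv 2 (flin f A) (flin f B)"
proof -
  have "flin f (\<lambda>xs. A xs - B xs) \<in> rel 2"
    by (rule free2.lext_in_R) (use assms in \<open>simp add: diff_in_rel_iff\<close>)
  then show ?thesis by (simp add: free2.lext_fun_diff diff_in_rel_iff)
qed

lemma multilinear_mod_bv2:
  assumes len: "\<And>zs. length zs = n \<Longrightarrow> length (P zs) = 2"
    and upd: "\<And>zs i. length zs = n \<Longrightarrow> i < n \<Longrightarrow>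
      \<exists>j \<phi>. j < 2 \<and> k_linear sc sc \<phi> \<and> (\<forall>x. P (zs[i := x]) = (P zs)[j := \<phi> x])"
  shows "free2.multilinear_mod n (\<lambda>xs. bv (P xs))"
  unfolding free2.multilinear_mod_def
proof (intro conjI allI impI)
  fix zs :: "'a list" and i a b
  assume l: "length zs = n" "i < n"
  obtain j \<phi> where j: "j < 2" "k_linear sc sc \<phi>" "\<forall>x. P (zs[i := x]) = (P zs)[j := \<phi> x]"
    using upd[OF l] by blast
  have "(\<lambda>z. bv ((P zs)[j := \<phi> a + \<phi> b]) z - bv ((P zs)[j := \<phi> a]) z - bv ((P zs)[j := \<phi> b]) z)
      \<in> rel 2"
    using rel_update_add[of j "P zs"] j len[OF l(1)] by simp
  then show "bv (P (zs[i := a + b])) - bv (P (zs[i := a])) - bv (P (zs[i := b])) \<in> rel 2"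
    using j by (simp add: fun_diff_def k_linear_def)
next
  fix zs :: "'a list" and i c a
  assume l: "length zs = n" "i < n"
  obtain j \<phi> where j: "j < 2" "k_linear sc sc \<phi>" "\<forall>x. P (zs[i := x]) = (P zs)[j := \<phi> x]"
    using upd[OF l] by blast
  have "(\<lambda>z. bv ((P zs)[j := sc c (\<phi> a)]) z - c * bv ((P zs)[j := \<phi> a]) z) \<in> rel 2"
    using rel_update_sc[of j "P zs"] j len[OF l(1)] by simp
  then show "bv (P (zs[i := sc c a])) - (\<lambda>zs'. c * bv (P (zs[i := a])) zs') \<in> rel 2"
    using j by (simp add: fun_diff_def k_linear_def)
qed

end

locale k_algebra = kctx sc for sc :: "'k::comm_ring_1 \<Rightarrow> 'a::ring_1 \<Rightarrow> 'a" +
  assumes kalgebra: kalgebra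
begin

lemma sc_add_right: "sc c (x + y) = sc c x + sc c y"
  using kalgebra by (simp add: kalgebra_def)

lemma sc_add_left: "sc (c + d) x = sc c x + sc d x"
  using kalgebra by (simp add: kalgebra_def)

lemma sc_mult: "sc (c * d) x = sc c (sc d x)"
  using kalgebra by (simp add: kalgebra_def)

lemma sc_one [simp]: "sc 1 x = x"
  using kalgebra by (simp add: kalgebra_def)

lemma sc_mult_left: "sc c (x * y) = sc c x * y"
  using kalgebra unfolding kalgebra_def by blast

lemma sc_mult_right: "sc c (x * y) = x * sc c y"
  using kalgebra unfolding kalgebra_def by blast

lemma sc_eq_mult_right: "sc c x = x * sc c 1"
  using sc_mult_right[of c x 1] by simp

lemma sc_eq_mult_left: "sc c x = sc c 1 * x"
  using sc_mult_left[of c 1 x] by simp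

end

sublocale k_algebra \<subseteq> alg: lin_ext sc sc "{0}"
  rewrites "lin_ext.lext sc = alin"
proof -
  have "sc c 0 = 0" for c
    using sc_add_right[of c 0 0] by simp
  then show "lin_ext sc {0}"
    by unfold_locales (auto simp: sc_add_right sc_add_left sc_mult)
  then show "lin_ext.lext sc = alin"
    by (simp add: fun_eq_iff alin_def lin_ext.lext_def)
qed

context k_algebra
begin

lemma multilinear_map2_left:
  assumes "length ys = 2"
  shows "free2.multilinear_mod 2 (\<lambda>xs. bv (map2 (*) xs ys))"
proof (rule multilinear_mod_bv2)
  fix zs :: "'a list" and i :: nat
  assume "length zs = 2" "i < 2"
  then show "\<exists>j \<phi>. j < 2 \<and> k_linear sc sc \<phi> \<and> (\<forall>x. map2 (*) (zs[i := x]) ys = (map2 (*) zs ys)[j := \<phi> x])"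
    using assms by (intro exI[of _ i] exI[of _ "\<lambda>x. x * ys ! i"])
      (simp add: k_linear_def distrib_right sc_mult_left map2_update_left)
qed (simp add: assms)

lemma multilinear_map2_right:
  assumes "length xs = 2"
  shows "free2.multilinear_mod 2 (\<lambda>ys. bv (map2 (*) xs ys))"
proof (rule multilinear_mod_bv2)
  fix zs :: "'a list" and i :: nat
  assume "length zs = 2" "i < 2"
  then show "\<exists>j \<phi>. j < 2 \<and> k_linear sc sc \<phi> \<and> (\<forall>x. map2 (*) xs (zs[i := x]) = (map2 (*) xs zs)[j := \<phi> x])"
    using assms by (intro exI[of _ i] exI[of _ "\<lambda>x. xs ! i * x"])
      (simp add: k_linear_def distrib_left sc_mult_right map2_update_right)
qed (simp add: assms)

lemma free_fmul [simp]:
  fixes f g :: "'a list \<Rightarrow> 'k"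
  assumes "f \<in> free 2" and "g \<in> free 2"
  shows "fmul f g \<in> free 2"
proof -
  have "length (map2 (*) xs ys) = 2" if "xs \<in> fsupp f" "ys \<in> fsupp g" for xs ys
    using freeD(2)[OF assms(1) that(1)] freeD(2)[OF assms(2) that(2)] by simp
  then show ?thesis
    unfolding fmul_eq_flin using assms by (intro free_flin) (auto dest: freeD(1))
qed

lemma fmul_rel_equiv_left:
  fixes f f' g :: "'a list \<Rightarrow> 'k"
  assumes "f \<in> free 2" "f' \<in> free 2" "g \<in> free 2" "rel_equiv 2 f f'"
  shows "rel_equiv 2 (fmul f g) (fmul f' g)"
proof -
  have "free2.multilinear_mod 2 (\<lambda>xs. flin g (\<lambda>ys. bv (map2 (*) xs ys)))"
    using assms(3) multilinear_map2_left by (intro free2.multilinear_mod_lext) (auto dest: freeD)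
  then show ?thesis
    unfolding fmul_eq_flin using assms by (intro flin_rel_equiv) (auto dest: freeD)
qed

lemma fmul_rel_equiv_right:
  fixes f g g' :: "'a list \<Rightarrow> 'k"
  assumes "f \<in> free 2" "g \<in> free 2" "g' \<in> free 2" "rel_equiv 2 g g'"
  shows "rel_equiv 2 (fmul f g) (fmul f g')"
  unfolding fmul_eq_flin using assms multilinear_map2_right freeD(2)[OF assms(1)]
  by (intro flin_cong_rel_equiv flin_rel_equiv) (auto dest: freeD)

lemma tmul_cls:
  fixes f g :: "'a list \<Rightarrow> 'k"
  assumes "f \<in> free 2" and "g \<in> free 2"
  shows "tmul 2 (cls 2 f) (cls 2 g) = cls 2 (fmul f g)"
proof -
  have "rel_equiv 2 (fmul (rep (cls 2 f)) (rep (cls 2 g))) (fmul f (rep (cls 2 g)))"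
    using assms rep_cls by (intro fmul_rel_equiv_left) auto
  also have "rel_equiv 2 \<dots> (fmul f g)"
    using assms rep_cls by (intro fmul_rel_equiv_right) auto
  finally show ?thesis
    unfolding tmul_def using assms rep_cls by (intro cls_eqI) auto
qed

lemma tens2_mult: "tmul 2 (tens [a, b]) (tens [c, d]) = tens [a * c, b * d]"
  by (simp add: tens2_eq_cls tmul_cls bv2_in_free fmul_eq_flin)

lemma fmul_assoc:
  fixes f g h :: "'a list \<Rightarrow> 'k"
  assumes "finite (fsupp f)" "finite (fsupp g)" "finite (fsupp h)"
  shows "fmul (fmul f g) h = fmul f (fmul g h)"
proof -
  have "fmul (fmul f g) h = flin (fmul f g) (\<lambda>ws. flin h (\<lambda>vs. bv (map2 (*) ws vs)))"
    by (simp add: fmul_eq_flin[of "fmul f g"])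
  also have "\<dots> = flin f (\<lambda>xs. flin g (\<lambda>ys. flin h (\<lambda>vs. bv (map2 (*) (map2 (*) xs ys) vs))))"
    using free2.lext_fmul[OF assms(1,2)] by simp
  also have "\<dots> = flin f (\<lambda>xs. flin g (\<lambda>ys. flin h (\<lambda>vs. bv (map2 (*) xs (map2 (*) ys vs)))))"
    by (simp add: map2_mult_assoc)
  also have "\<dots> = fmul f (fmul g h)"
    using free2.lext_fmul[OF assms(2,3)] by (simp add: fmul_eq_flin[of f "fmul g h"])
  finally show ?thesis .
qed

lemma fmul_one_left:
  fixes g :: "'a list \<Rightarrow> 'k"
  assumes "g \<in> free 2"
  shows "fmul (bv [1, 1]) g = g"
proof -
  have "fmul (bv [1, 1]) g = flin g bv"
    unfolding fmul_eq_flin using assms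
    by (auto intro!: flin_cong dest!: freeD(2) simp: numeral_2_eq_2 length_Suc_conv)
  then show ?thesis using flin_bv assms freeD by auto
qed

lemma fmul_one_right:
  fixes g :: "'a list \<Rightarrow> 'k"
  assumes "g \<in> free 2"
  shows "fmul g (bv [1, 1]) = g"
proof -
  have "fmul g (bv [1, 1]) = flin g bv"
    unfolding fmul_eq_flin using assms
    by (auto intro!: flin_cong dest!: freeD(2) simp: numeral_2_eq_2 length_Suc_conv)
  then show ?thesis using flin_bv assms freeD by auto
qed

lemma fmul_add_left:
  fixes f f' g :: "'a list \<Rightarrow> 'k"
  assumes "finite (fsupp f)" "finite (fsupp f')"
  shows "fmul (\<lambda>z. f z + f' z) g = (\<lambda>z. fmul f g z + fmul f' g z)"
  unfolding fmul_eq_flin using free2.lext_add[OF assms] by (simp add: plus_fun_def)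

lemma fmul_smul_left:
  fixes f g :: "'a list \<Rightarrow> 'k"
  assumes "finite (fsupp f)"
  shows "fmul (\<lambda>z. c * f z) g = (\<lambda>z. c * fmul f g z)"
  unfolding fmul_eq_flin using free2.lext_smul[OF assms] by simp

lemma fmul_add_right:
  fixes f g g' :: "'a list \<Rightarrow> 'k"
  assumes "finite (fsupp g)" "finite (fsupp g')"
  shows "fmul f (\<lambda>z. g z + g' z) = (\<lambda>z. fmul f g z + fmul f g' z)"
  unfolding fmul_eq_flin free2.lext_add[OF assms] free2.lext_fun_add by (simp add: plus_fun_def)

lemma fmul_smul_right:
  fixes f g :: "'a list \<Rightarrow> 'k"
  assumes "finite (fsupp g)"
  shows "fmul f (\<lambda>z. c * g z) = (\<lambda>z. c * fmul f g z)"
  unfolding fmul_eq_flin free2.lext_smul[OF assms] free2.lext_fun_smul by simp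

lemma T_tadd [simp]: "X \<in> T n \<Longrightarrow> Y \<in> T n \<Longrightarrow> tadd n X Y \<in> T n"
  by (auto elim!: T_cases simp: tadd_cls cls_in_T free_add)

lemma T_tneg [simp]: "X \<in> T n \<Longrightarrow> tneg n X \<in> T n"
  by (auto elim!: T_cases simp: tneg_cls cls_in_T free_neg)

lemma T_tsc [simp]: "X \<in> T n \<Longrightarrow> tsc n c X \<in> T n"
  by (auto elim!: T_cases simp: tsc_cls cls_in_T free_smul)

lemma T_tzero [simp]: "tzero n \<in> T n"
  by (simp add: tzero_def cls_in_T)

lemma T_tmul [simp]: "X \<in> T 2 \<Longrightarrow> Y \<in> T 2 \<Longrightarrow> tmul 2 X Y \<in> T 2"
  by (auto elim!: T_cases simp: tmul_cls cls_in_T)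

lemma T_tone [simp]: "tone 2 \<in> T 2"
  by (simp add: tone2_eq_cls cls_in_T bv2_in_free)

lemma T_tens2 [simp]: "tens [a, b] \<in> T 2"
  by (simp add: tens2_eq_cls cls_in_T bv2_in_free)

lemma tadd_assoc: "X \<in> T n \<Longrightarrow> Y \<in> T n \<Longrightarrow> Z \<in> T n \<Longrightarrow> tadd n (tadd n X Y) Z = tadd n X (tadd n Y Z)"
  by (auto elim!: T_cases simp: tadd_cls free_add add.assoc)

lemma tadd_commute: "X \<in> T n \<Longrightarrow> Y \<in> T n \<Longrightarrow> tadd n X Y = tadd n Y X"
  by (auto elim!: T_cases simp: tadd_cls add.commute)

lemma tadd_tzero_left: "X \<in> T n \<Longrightarrow> tadd n (tzero n) X = X"
  by (auto elim!: T_cases simp: tadd_cls tzero_def)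

lemma tadd_tneg: "X \<in> T n \<Longrightarrow> tadd n X (tneg n X) = tzero n"
  by (auto elim!: T_cases simp: tadd_cls tneg_cls tzero_def free_neg)

lemma tneg_eq_tsc: "X \<in> T n \<Longrightarrow> tneg n X = tsc n (-1) X"
  by (auto elim!: T_cases simp: tneg_cls tsc_cls)

lemma tmul_assoc:
  "X \<in> T 2 \<Longrightarrow> Y \<in> T 2 \<Longrightarrow> Z \<in> T 2 \<Longrightarrow> tmul 2 (tmul 2 X Y) Z = tmul 2 X (tmul 2 Y Z)"
  by (auto elim!: T_cases simp: tmul_cls fmul_assoc freeD(1))

lemma tmul_tone_left: "X \<in> T 2 \<Longrightarrow> tmul 2 (tone 2) X = X"
  by (auto elim!: T_cases simp: tmul_cls tone2_eq_cls fmul_one_left bv2_in_free)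

lemma tmul_tone_right: "X \<in> T 2 \<Longrightarrow> tmul 2 X (tone 2) = X"
  by (auto elim!: T_cases simp: tmul_cls tone2_eq_cls fmul_one_right bv2_in_free)

lemma tmul_tadd_left:
  "X \<in> T 2 \<Longrightarrow> Y \<in> T 2 \<Longrightarrow> Z \<in> T 2 \<Longrightarrow> tmul 2 (tadd 2 X Y) Z = tadd 2 (tmul 2 X Z) (tmul 2 Y Z)"
  by (auto elim!: T_cases simp: tadd_cls tmul_cls free_add fmul_add_left freeD(1))

lemma tmul_tadd_right:
  "X \<in> T 2 \<Longrightarrow> Y \<in> T 2 \<Longrightarrow> Z \<in> T 2 \<Longrightarrow> tmul 2 X (tadd 2 Y Z) = tadd 2 (tmul 2 X Y) (tmul 2 X Z)"
  by (auto elim!: T_cases simp: tadd_cls tmul_cls free_add fmul_add_right freeD(1))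

lemma tmul_tsc_left: "X \<in> T 2 \<Longrightarrow> Y \<in> T 2 \<Longrightarrow> tmul 2 (tsc 2 c X) Y = tsc 2 c (tmul 2 X Y)"
  by (auto elim!: T_cases simp: tsc_cls tmul_cls free_smul fmul_smul_left freeD(1))

lemma tmul_tsc_right: "X \<in> T 2 \<Longrightarrow> Y \<in> T 2 \<Longrightarrow> tmul 2 X (tsc 2 c Y) = tsc 2 c (tmul 2 X Y)"
  by (auto elim!: T_cases simp: tsc_cls tmul_cls free_smul fmul_smul_right freeD(1))

lemma tmul_scalar_left: "X \<in> T 2 \<Longrightarrow> tmul 2 (tsc 2 c (tone 2)) X = tsc 2 c X"
  by (simp add: tmul_tsc_left tmul_tone_left)

lemma tmul_scalar_right: "X \<in> T 2 \<Longrightarrow> tmul 2 X (tsc 2 c (tone 2)) = tsc 2 c X"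
  by (simp add: tmul_tsc_right tmul_tone_right)

lemma tmul_tneg_right: "X \<in> T 2 \<Longrightarrow> Y \<in> T 2 \<Longrightarrow> tmul 2 X (tneg 2 Y) = tneg 2 (tmul 2 X Y)"
  by (simp add: tneg_eq_tsc tmul_tsc_right)

lemma tmul_tzero_right: "X \<in> T 2 \<Longrightarrow> tmul 2 X (tzero 2) = tzero 2"
proof -
  have "tzero 2 = tsc 2 0 Y" if "Y \<in> T 2" for Y :: "('a list \<Rightarrow> 'k) set"
    using that by (auto elim!: T_cases simp: tsc_cls tzero_def)
  then show "X \<in> T 2 \<Longrightarrow> tmul 2 X (tzero 2) = tzero 2"
    by (metis T_tmul T_tone tmul_scalar_right)
qed

lemma flin_bv2_left:
  "finite (fsupp g) \<Longrightarrow> rel_equiv 2 (flin g (\<lambda>zs. bv [H zs, w])) (bv [alin g H, w])"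
  using sum_bv2_left[of "fsupp g" g H w] by (simp add: flin_def alin_def)

lemma flin_bv2_right:
  "finite (fsupp g) \<Longrightarrow> rel_equiv 2 (flin g (\<lambda>zs. bv [w, H zs])) (bv [w, alin g H])"
  using sum_bv2_right[of "fsupp g" g w H] by (simp add: flin_def alin_def)

lemma alin_zero [simp]: "alin f (\<lambda>_. 0) = 0"
  by (simp add: alin_def)

lemma fmul_bv2_one:
  fixes g :: "'a list \<Rightarrow> 'k"
  assumes "g \<in> free 2"
  shows "fmul (bv [p, 1]) g = flin g (\<lambda>ys. bv [p * ys!0, ys!1])"
  unfolding fmul_eq_flin flin_bv_left using assms
  by (intro flin_cong) (auto dest!: freeD(2) simp: numeral_2_eq_2 length_Suc_conv)

end

context kctx
begin

definition left_ideal :: "('a list \<Rightarrow> 'k) set set \<Rightarrow> bool" where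
  "left_ideal I \<longleftrightarrow> I \<subseteq> T 2 \<and> tzero 2 \<in> I \<and> (\<forall>x\<in>I. \<forall>y\<in>I. tadd 2 x y \<in> I) \<and>
     (\<forall>x\<in>I. tneg 2 x \<in> I) \<and> (\<forall>b\<in>T 2. \<forall>x\<in>I. tmul 2 b x \<in> I)"

abbreviation tdiff :: "('a list \<Rightarrow> 'k) set \<Rightarrow> ('a list \<Rightarrow> 'k) set \<Rightarrow> ('a list \<Rightarrow> 'k) set" where
  "tdiff x y \<equiv> tadd 2 x (tneg 2 y)"

end

context k_algebra
begin

lemma lideal_eq: "lideal G = \<Inter>{I. left_ideal I \<and> G \<subseteq> I}"
  unfolding lideal_def left_ideal_def by (simp add: conj_ac)

lemma left_ideal_T: "left_ideal (T 2)"
  by (simp add: left_ideal_def)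

lemma lideal_least: "left_ideal I \<Longrightarrow> G \<subseteq> I \<Longrightarrow> lideal G \<subseteq> I"
  unfolding lideal_eq by blast

lemma generators_in_lideal: "G \<subseteq> lideal G"
  unfolding lideal_eq by blast

lemma left_ideal_lideal:
  assumes "G \<subseteq> T 2"
  shows "left_ideal (lideal G)"
  using lideal_least[OF left_ideal_T assms] unfolding left_ideal_def
  by (auto simp: lideal_eq left_ideal_def)

lemma lideal_induct [consumes 2, case_names generator zero add neg mult]:
  assumes "x \<in> lideal G" and "G \<subseteq> T 2"
    and "\<And>g. g \<in> G \<Longrightarrow> P g"
    and "P (tzero 2)"
    and "\<And>x y. x \<in> T 2 \<Longrightarrow> y \<in> T 2 \<Longrightarrow> P x \<Longrightarrow> P y \<Longrightarrow> P (tadd 2 x y)"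
    and "\<And>x. x \<in> T 2 \<Longrightarrow> P x \<Longrightarrow> P (tneg 2 x)"
    and "\<And>b x. b \<in> T 2 \<Longrightarrow> x \<in> T 2 \<Longrightarrow> P x \<Longrightarrow> P (tmul 2 b x)"
  shows "P x"
proof -
  have "left_ideal {x \<in> T 2. P x}"
    using assms(4-) by (auto simp: left_ideal_def)
  moreover have "G \<subseteq> {x \<in> T 2. P x}"
    using assms(2,3) by blast
  ultimately show ?thesis
    using lideal_least assms(1) by blast
qed

lemma tdiff_self: "x \<in> T 2 \<Longrightarrow> tdiff x x = tzero 2"
  by (rule tadd_tneg)

lemma tdiff_swap: "x \<in> T 2 \<Longrightarrow> y \<in> T 2 \<Longrightarrow> tdiff y x = tneg 2 (tdiff x y)"
  by (elim T_cases) (simp add: tadd_cls tneg_cls free_add free_neg free_diff)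

lemma tdiff_trans: "x \<in> T 2 \<Longrightarrow> y \<in> T 2 \<Longrightarrow> z \<in> T 2 \<Longrightarrow> tdiff x z = tadd 2 (tdiff x y) (tdiff y z)"
  by (elim T_cases) (simp add: tadd_cls tneg_cls free_add free_neg free_diff)

lemma tdiff_tadd:
  "x \<in> T 2 \<Longrightarrow> y \<in> T 2 \<Longrightarrow> x' \<in> T 2 \<Longrightarrow> y' \<in> T 2 \<Longrightarrow>
   tdiff (tadd 2 x y) (tadd 2 x' y') = tadd 2 (tdiff x x') (tdiff y y')"
  by (elim T_cases) (simp add: tadd_cls tneg_cls free_add free_neg free_diff algebra_simps)

lemma tdiff_tmul: "b \<in> T 2 \<Longrightarrow> x \<in> T 2 \<Longrightarrow> y \<in> T 2 \<Longrightarrow> tdiff (tmul 2 b x) (tmul 2 b y) = tmul 2 b (tdiff x y)"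
  by (simp add: tmul_tadd_right tmul_tneg_right)

end

locale lideal_quotient = k_algebra sc for sc :: "'k::comm_ring_1 \<Rightarrow> 'a::ring_1 \<Rightarrow> 'a" +
  fixes I :: "('a list \<Rightarrow> 'k) set set"
  assumes left_ideal: "left_ideal I"
begin

lemma ideal_subset_T: "x \<in> I \<Longrightarrow> x \<in> T 2"
  using left_ideal by (auto simp: left_ideal_def)

lemma ideal_zero: "tzero 2 \<in> I"
  and ideal_add: "x \<in> I \<Longrightarrow> y \<in> I \<Longrightarrow> tadd 2 x y \<in> I"
  and ideal_neg: "x \<in> I \<Longrightarrow> tneg 2 x \<in> I"
  and ideal_mult: "b \<in> T 2 \<Longrightarrow> x \<in> I \<Longrightarrow> tmul 2 b x \<in> I"
  using left_ideal by (auto simp: left_ideal_def)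

lemma qcls_self: "x \<in> T 2 \<Longrightarrow> x \<in> qcls I x"
  by (simp add: qcls_def tdiff_self ideal_zero)

lemma qcls_eq_iff:
  assumes "x \<in> T 2" and "y \<in> T 2"
  shows "qcls I x = qcls I y \<longleftrightarrow> tdiff x y \<in> I"
proof
  assume "qcls I x = qcls I y"
  then show "tdiff x y \<in> I"
    using qcls_self[OF assms(1)] by (simp add: qcls_def)
next
  assume d: "tdiff x y \<in> I"
  have "tdiff z y \<in> I" if "z \<in> T 2" "tdiff z x \<in> I" for z
  proof -
    have "tdiff z y = tadd 2 (tdiff z x) (tdiff x y)"
      using that assms by (intro tdiff_trans)
    then show ?thesis using that d ideal_add by simp
  qed
  moreover have "tdiff z x \<in> I" if "z \<in> T 2" "tdiff z y \<in> I" for z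
  proof -
    have "tdiff z x = tadd 2 (tdiff z y) (tneg 2 (tdiff x y))"
      using that assms tdiff_trans[of z y x] tdiff_swap[of x y] by simp
    then show ?thesis using that d ideal_add ideal_neg by simp
  qed
  ultimately show "qcls I x = qcls I y"
    by (auto simp: qcls_def)
qed

lemma rep_qcls:
  assumes "x \<in> T 2"
  shows "rep (qcls I x) \<in> T 2" and "tdiff (rep (qcls I x)) x \<in> I"
proof -
  have "rep (qcls I x) \<in> qcls I x"
    unfolding rep_def using qcls_self[OF assms] by (rule someI[where P = "\<lambda>y. y \<in> qcls I x"])
  then show "rep (qcls I x) \<in> T 2" and "tdiff (rep (qcls I x)) x \<in> I"
    by (auto simp: qcls_def)
qed

lemma Q_ball: "(\<forall>q\<in>Q I. P q) \<longleftrightarrow> (\<forall>x\<in>T 2. P (qcls I x))"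
  by (simp add: Q_def)

lemma Q_cases:
  assumes "q \<in> Q I"
  obtains x where "x \<in> T 2" and "q = qcls I x"
  using assms by (auto simp: Q_def)

lemma qcls_in_Q [simp]: "x \<in> T 2 \<Longrightarrow> qcls I x \<in> Q I"
  by (simp add: Q_def)

lemma qadd_qcls: "x \<in> T 2 \<Longrightarrow> y \<in> T 2 \<Longrightarrow> qadd I (qcls I x) (qcls I y) = qcls I (tadd 2 x y)"
  unfolding qadd_def using rep_qcls[of x] rep_qcls[of y]
  by (simp add: qcls_eq_iff tdiff_tadd ideal_add)

lemma qact_qcls: "b \<in> T 2 \<Longrightarrow> x \<in> T 2 \<Longrightarrow> qact I b (qcls I x) = qcls I (tmul 2 b x)"
  unfolding qact_def using rep_qcls[of x]
  by (simp add: qcls_eq_iff tdiff_tmul ideal_mult)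

lemma lmod_quotient: "lmod (Q I) (qadd I) (qact I)"
  unfolding lmod_def
proof (intro conjI)
  show "\<forall>x\<in>Q I. \<forall>y\<in>Q I. qadd I x y \<in> Q I"
    by (auto elim!: Q_cases simp: qadd_qcls)
  show "\<forall>b\<in>T 2. \<forall>x\<in>Q I. qact I b x \<in> Q I"
    by (auto elim!: Q_cases simp: qact_qcls)
  show "\<forall>x\<in>Q I. \<forall>y\<in>Q I. \<forall>z\<in>Q I. qadd I (qadd I x y) z = qadd I x (qadd I y z)"
    by (auto elim!: Q_cases simp: qadd_qcls tadd_assoc)
  show "\<forall>x\<in>Q I. \<forall>y\<in>Q I. qadd I x y = qadd I y x"
  proof (intro ballI)
    fix x y
    assume "x \<in> Q I" "y \<in> Q I"
    then show "qadd I x y = qadd I y x"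
      by (elim Q_cases) (metis qadd_qcls tadd_commute)
  qed
  show "\<exists>z\<in>Q I. (\<forall>x\<in>Q I. qadd I z x = x) \<and> (\<forall>x\<in>Q I. \<exists>y\<in>Q I. qadd I x y = z)"
  proof (rule bexI[of _ "qcls I (tzero 2)"])
    show "(\<forall>x\<in>Q I. qadd I (qcls I (tzero 2)) x = x) \<and> (\<forall>x\<in>Q I. \<exists>y\<in>Q I. qadd I x y = qcls I (tzero 2))"
    proof (intro conjI ballI)
      fix x
      assume "x \<in> Q I"
      then obtain u where u: "u \<in> T 2" "x = qcls I u"
        by (rule Q_cases)
      show "qadd I (qcls I (tzero 2)) x = x"
        using u by (simp add: qadd_qcls tadd_tzero_left)
      show "\<exists>y\<in>Q I. qadd I x y = qcls I (tzero 2)"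
        using u by (intro bexI[of _ "qcls I (tneg 2 u)"]) (simp_all add: qadd_qcls tadd_tneg)
    qed
  qed simp
  show "\<forall>b\<in>T 2. \<forall>x\<in>Q I. \<forall>y\<in>Q I. qact I b (qadd I x y) = qadd I (qact I b x) (qact I b y)"
    by (auto elim!: Q_cases simp: qadd_qcls qact_qcls tmul_tadd_right)
  show "\<forall>b\<in>T 2. \<forall>b'\<in>T 2. \<forall>x\<in>Q I. qact I (tadd 2 b b') x = qadd I (qact I b x) (qact I b' x)"
    by (auto elim!: Q_cases simp: qadd_qcls qact_qcls tmul_tadd_left)
  show "\<forall>b\<in>T 2. \<forall>b'\<in>T 2. \<forall>x\<in>Q I. qact I (tmul 2 b b') x = qact I b (qact I b' x)"
    by (auto elim!: Q_cases simp: qact_qcls tmul_assoc)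
  show "\<forall>x\<in>Q I. qact I (tone 2) x = x"
    by (auto elim!: Q_cases simp: qact_qcls tmul_tone_left)
qed

lemma ideal_tsc: "x \<in> I \<Longrightarrow> tsc 2 c x \<in> I"
  using ideal_mult[of "tsc 2 c (tone 2)" x] ideal_subset_T tmul_scalar_left by simp

lemma cls_sum_in_ideal:
  "finite B \<Longrightarrow> (\<And>xs. xs \<in> B \<Longrightarrow> C xs \<in> free 2 \<and> cls 2 (C xs) \<in> I) \<Longrightarrow>
   cls 2 (\<lambda>z. \<Sum>xs\<in>B. f xs * C xs z) \<in> I"
proof (induction B rule: finite_induct)
  case empty
  then show ?case using ideal_zero by (simp add: tzero_def)
next
  case (insert x B)
  have "(\<lambda>z. \<Sum>xs\<in>B. f xs * C xs z) \<in> free 2"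
    using insert by (intro free_sum free_smul) auto
  then have "cls 2 (\<lambda>z. \<Sum>xs\<in>insert x B. f xs * C xs z)
      = tadd 2 (tsc 2 (f x) (cls 2 (C x))) (cls 2 (\<lambda>z. \<Sum>xs\<in>B. f xs * C xs z))"
    using insert by (simp add: tsc_cls tadd_cls free_smul)
  also have "\<dots> \<in> I"
    using insert by (intro ideal_add ideal_tsc) auto
  finally show ?case .
qed

lemma qcls_flin_cong:
  fixes f :: "'a list \<Rightarrow> 'k"
  assumes fin: "finite (fsupp f)"
    and eq: "\<And>xs. xs \<in> fsupp f \<Longrightarrow> A xs \<in> free 2 \<and> B xs \<in> free 2 \<and> qcls I (cls 2 (A xs)) = qcls I (cls 2 (B xs))"
  shows "qcls I (cls 2 (flin f A)) = qcls I (cls 2 (flin f B))"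
proof -
  have free: "flin f A \<in> free 2" "flin f B \<in> free 2"
    using fin eq by (auto intro!: free_flin)
  have "tdiff (cls 2 (flin f A)) (cls 2 (flin f B)) = cls 2 (\<lambda>z. \<Sum>xs\<in>fsupp f. f xs * (A xs z - B xs z))"
    using free by (simp add: tneg_cls tadd_cls free_neg flin_def sum_subtractf right_diff_distrib)
  also have "\<dots> \<in> I"
  proof (rule cls_sum_in_ideal[OF fin])
    fix xs
    assume "xs \<in> fsupp f"
    then show "(\<lambda>z. A xs z - B xs z) \<in> free 2 \<and> cls 2 (\<lambda>z. A xs z - B xs z) \<in> I"
      using eq[of xs] by (auto simp: qcls_eq_iff cls_in_T tneg_cls tadd_cls free_neg free_diff)
  qed
  finally show ?thesis
    using free by (simp add: qcls_eq_iff cls_in_T)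
qed

end

section \<open>The preantipode \<open>(A \<otimes> A)/W\<close>\<close>

locale biunital_bialgebra = k_algebra sc for sc :: "'k::comm_ring_1 \<Rightarrow> 'a::ring_1 \<Rightarrow> 'a" +
  fixes \<Delta> :: "'a \<Rightarrow> ('a list \<Rightarrow> 'k) set" and \<epsilon> :: "'a \<Rightarrow> 'k"
  assumes bialgebra: "bialgebra \<Delta> \<epsilon>"
begin

abbreviation W :: "('a list \<Rightarrow> 'k) set set" where
  "W \<equiv> Wid \<Delta> \<epsilon>"

definition W_gen :: "'a \<Rightarrow> ('a list \<Rightarrow> 'k) set" where
  "W_gen a = tadd 2 (tsc 2 (\<epsilon> a) (tone 2)) (tneg 2 (\<Delta> a))"

lemma Delta_in_T [simp]: "\<Delta> a \<in> T 2"
  using bialgebra by (simp add: bialgebra_def)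

lemma W_gen_in_T [simp]: "W_gen a \<in> T 2"
  by (simp add: W_gen_def)

lemma W_eq_lideal: "W = lideal (range W_gen)"
  by (simp add: Wid_def W_gen_def full_SetCompr_eq)

lemma left_ideal_W: "left_ideal W"
  unfolding W_eq_lideal by (rule left_ideal_lideal) auto

lemma W_gen_in_W: "W_gen a \<in> W"
  unfolding W_eq_lideal using generators_in_lideal by blast

lemma W_induct [consumes 1, case_names generator zero add neg mult]:
  assumes "x \<in> W"
    and "\<And>a. P (W_gen a)"
    and "P (tzero 2)"
    and "\<And>x y. x \<in> T 2 \<Longrightarrow> y \<in> T 2 \<Longrightarrow> P x \<Longrightarrow> P y \<Longrightarrow> P (tadd 2 x y)"
    and "\<And>x. x \<in> T 2 \<Longrightarrow> P x \<Longrightarrow> P (tneg 2 x)"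
    and "\<And>b x. b \<in> T 2 \<Longrightarrow> x \<in> T 2 \<Longrightarrow> P x \<Longrightarrow> P (tmul 2 b x)"
  shows "P x"
  using assms(1) unfolding W_eq_lideal
  by (rule lideal_induct) (use assms(2-) in auto)

end

sublocale biunital_bialgebra \<subseteq> lideal_quotient sc "Wid \<Delta> \<epsilon>"
  by unfold_locales (rule left_ideal_W)

context biunital_bialgebra
begin

lemma qcls_tmul_Delta:
  assumes "x \<in> T 2"
  shows "qcls W (tmul 2 x (\<Delta> a)) = qcls W (tsc 2 (\<epsilon> a) x)"
proof -
  have "tdiff (\<Delta> a) (tsc 2 (\<epsilon> a) (tone 2)) = tneg 2 (W_gen a)"
    using tdiff_swap[of "tsc 2 (\<epsilon> a) (tone 2)" "\<Delta> a"] by (simp add: W_gen_def)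
  then have "tdiff (tmul 2 x (\<Delta> a)) (tsc 2 (\<epsilon> a) x) = tmul 2 x (tneg 2 (W_gen a))"
    using assms tdiff_tmul[of x "\<Delta> a" "tsc 2 (\<epsilon> a) (tone 2)"] by (simp add: tmul_scalar_right)
  then show ?thesis
    using assms by (simp add: qcls_eq_iff ideal_mult ideal_neg W_gen_in_W)
qed

lemma Zp_tadd: "g \<in> Zp \<Delta> \<epsilon> \<Longrightarrow> x \<in> T 2 \<Longrightarrow> y \<in> T 2 \<Longrightarrow> g (tadd 2 x y) = g x + g y"
  and Zp_tsc: "g \<in> Zp \<Delta> \<epsilon> \<Longrightarrow> x \<in> T 2 \<Longrightarrow> g (tsc 2 c x) = c * g x"
  and Zp_tmul_Delta: "g \<in> Zp \<Delta> \<epsilon> \<Longrightarrow> x \<in> T 2 \<Longrightarrow> g (tmul 2 x (\<Delta> a)) = g x * \<epsilon> a"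
  and Zp_outside: "g \<in> Zp \<Delta> \<epsilon> \<Longrightarrow> x \<notin> T 2 \<Longrightarrow> g x = 0"
  by (auto simp: Zp_def)

lemma Zp_tzero: "g \<in> Zp \<Delta> \<epsilon> \<Longrightarrow> g (tzero 2) = 0"
  using Zp_tadd[of g "tzero 2" "tzero 2"] by (simp add: tadd_tzero_left)

lemma Zp_tneg: "g \<in> Zp \<Delta> \<epsilon> \<Longrightarrow> x \<in> T 2 \<Longrightarrow> g (tneg 2 x) = - g x"
  using Zp_tadd[of g x "tneg 2 x"] Zp_tzero[of g] by (simp add: tadd_tneg eq_neg_iff_add_eq_0 add.commute)

text \<open>The elements \<open>x\<close> with \<open>g(b x) = 0\<close> for all \<open>b\<close> form a left ideal containing the
generators of \<open>W\<close>.\<close>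

lemma Zp_vanishes_on_W:
  assumes g: "g \<in> Zp \<Delta> \<epsilon>" and x: "x \<in> W"
  shows "g x = 0"
proof -
  have "x \<in> T 2 \<and> (\<forall>b\<in>T 2. g (tmul 2 b x) = 0)"
    using x
  proof (induction rule: W_induct)
    case (generator a)
    show ?case
      using g by (simp add: W_gen_def tmul_tadd_right tmul_scalar_right tmul_tneg_right Zp_tadd Zp_tsc
          Zp_tneg Zp_tmul_Delta mult.commute)
  next
    case zero
    show ?case using g by (simp add: tmul_tzero_right Zp_tzero)
  next
    case (add x y)
    then show ?case using g by (simp add: tmul_tadd_right Zp_tadd)
  next
    case (neg x)
    then show ?case using g by (simp add: tmul_tneg_right Zp_tneg)
  next
    case (mult b x)
    then show ?case by (simp add: tmul_assoc[symmetric])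
  qed
  then show ?thesis
    using tmul_tone_left[of x] T_tone by metis
qed

lemma Zp_rep_qcls: "g \<in> Zp \<Delta> \<epsilon> \<Longrightarrow> x \<in> T 2 \<Longrightarrow> g (rep (qcls W x)) = g x"
  using Zp_vanishes_on_W[of g "tdiff (rep (qcls W x)) x"] rep_qcls[of x]
  by (simp add: Zp_tadd Zp_tneg)

definition dual_to_Zp :: "(('a list \<Rightarrow> 'k) set set \<Rightarrow> 'k) \<Rightarrow> ('a list \<Rightarrow> 'k) set \<Rightarrow> 'k" where
  "dual_to_Zp \<phi> = (\<lambda>u. if u \<in> T 2 then \<phi> (qcls W u) else 0)"

lemma dual_to_Zp_in_Zp:
  assumes "\<phi> \<in> mdual (Q W) (qadd W) (qact W)"
  shows "dual_to_Zp \<phi> \<in> Zp \<Delta> \<epsilon>"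
proof -
  have "\<phi> (qcls W (tadd 2 x y)) = \<phi> (qcls W x) + \<phi> (qcls W y)" if "x \<in> T 2" "y \<in> T 2" for x y
    using assms that by (simp add: mdual_def Q_ball qadd_qcls)
  moreover have "\<phi> (qcls W (tsc 2 c x)) = c * \<phi> (qcls W x)" if "x \<in> T 2" for c x
    using assms that by (simp add: mdual_def Q_ball qact_qcls tmul_scalar_left)
  ultimately show ?thesis
    unfolding Zp_def dual_to_Zp_def by (auto simp: qcls_tmul_Delta mult.commute)
qed

lemma inj_on_dual_to_Zp: "inj_on dual_to_Zp (mdual (Q W) (qadd W) (qact W))"
proof (rule inj_onI)
  fix \<phi> \<psi>
  assume \<phi>: "\<phi> \<in> mdual (Q W) (qadd W) (qact W)" and \<psi>: "\<psi> \<in> mdual (Q W) (qadd W) (qact W)"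
    and eq: "dual_to_Zp \<phi> = dual_to_Zp \<psi>"
  show "\<phi> = \<psi>"
  proof
    fix r
    show "\<phi> r = \<psi> r"
    proof (cases "r \<in> Q W")
      case True
      then obtain u where "u \<in> T 2" "r = qcls W u" by (rule Q_cases)
      then show ?thesis using fun_cong[OF eq, of u] by (simp add: dual_to_Zp_def)
    next
      case False
      then show ?thesis using \<phi> \<psi> by (simp add: mdual_def)
    qed
  qed
qed

lemma Zp_in_image_dual_to_Zp:
  assumes g: "g \<in> Zp \<Delta> \<epsilon>"
  shows "g \<in> dual_to_Zp ` mdual (Q W) (qadd W) (qact W)"
proof
  define \<phi> where "\<phi> r = (if r \<in> Q W then g (rep r) else 0)" for r
  have \<phi>_qcls: "\<phi> (qcls W x) = g x" if "x \<in> T 2" for x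
    using that Zp_rep_qcls[OF g] by (simp add: \<phi>_def)
  show "\<phi> \<in> mdual (Q W) (qadd W) (qact W)"
    unfolding mdual_def Q_ball using g
    by (auto simp: \<phi>_qcls qadd_qcls qact_qcls tmul_scalar_left Zp_tadd Zp_tsc) (simp add: \<phi>_def)
  show "g = dual_to_Zp \<phi>"
    unfolding dual_to_Zp_def using Zp_outside[OF g] by (auto simp: \<phi>_qcls)
qed

theorem preantipode_quotient: "preantipode \<Delta> \<epsilon> (Q W) (qadd W) (qact W)"
  unfolding preantipode_def
proof (intro conjI exI[of _ dual_to_Zp] ballI)
  show "lmod (Q W) (qadd W) (qact W)"
    by (rule lmod_quotient)
  show "bij_betw dual_to_Zp (mdual (Q W) (qadd W) (qact W)) (Zp \<Delta> \<epsilon>)"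
    unfolding bij_betw_def using inj_on_dual_to_Zp dual_to_Zp_in_Zp Zp_in_image_dual_to_Zp by blast
next
  fix \<phi> \<psi>
  show "dual_to_Zp (\<lambda>x. \<phi> x + \<psi> x) = (\<lambda>u. dual_to_Zp \<phi> u + dual_to_Zp \<psi> u)"
    by (simp add: dual_to_Zp_def fun_eq_iff)
next
  fix \<phi> b
  assume "b \<in> T 2"
  then show "dual_to_Zp (dual_act (Q W) (qact W) \<phi> b) = Zact (dual_to_Zp \<phi>) b"
    by (auto simp: dual_to_Zp_def Zact_def dual_act_def fun_eq_iff qact_qcls)
qed

end

context k_algebra
begin

abbreviation klinear :: "('a \<Rightarrow> 'a) \<Rightarrow> bool" where
  "klinear h \<equiv> k_linear sc sc h"

lemma klinear_mult_left: "klinear (\<lambda>x. p * x)"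
  by (simp add: k_linear_def distrib_left sc_mult_right)

lemma klinear_mult_right: "klinear (\<lambda>x. x * q)"
  by (simp add: k_linear_def distrib_right sc_mult_left)

lemma klinear_comp: "klinear h \<Longrightarrow> klinear k \<Longrightarrow> klinear (\<lambda>x. h (k x))"
  by (simp add: k_linear_def)

lemma klinear_sc: "klinear (\<lambda>x. sc c x)"
  by (simp add: k_linear_def sc_add_right sc_mult[symmetric] mult.commute)

lemma klinear_sum:
  assumes "klinear h"
  shows "h (\<Sum>i\<in>I. F i) = (\<Sum>i\<in>I. h (F i))"
proof -
  have "h 0 = 0"
    using assms add_0[of 0] unfolding k_linear_def by (metis add_cancel_right_right)
  then show ?thesis
    using assms unfolding k_linear_def by (induction I rule: infinite_finite_induct) simp_all
qed

lemma alin_klinear: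
  assumes "klinear h"
  shows "alin f (\<lambda>xs. h (F xs)) = h (alin f F)"
  unfolding alin_def using assms klinear_sum[OF assms, of "\<lambda>xs. sc (f xs) (F xs)" "fsupp f"]
  by (simp add: k_linear_def)

lemma alin_mult_left: "alin f (\<lambda>xs. p * F xs) = p * alin f F"
  using alin_klinear[OF klinear_mult_left] .

lemma alin_mult_right: "alin f (\<lambda>xs. F xs * q) = alin f F * q"
  using alin_klinear[OF klinear_mult_right] .

lemma alin_sc: "alin f (\<lambda>xs. sc c (F xs)) = sc c (alin f F)"
  using alin_klinear[OF klinear_sc] .

lemma alin_rel_equiv:
  assumes "rel_equiv n f g" "finite (fsupp f)" "finite (fsupp g)" "alg.multilinear_mod n G"
  shows "alin f G = alin g G"
  using alg.lext_rel_equiv[OF assms] by simp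

lemma multilinear2:
  assumes "\<And>y. klinear (\<lambda>x. g x y)" and "\<And>x. klinear (\<lambda>y. g x y)"
  shows "alg.multilinear_mod 2 (\<lambda>l. g (l!0) (l!1))"
proof (rule alg.multilinear_modI)
  fix zs :: "'a list" and i :: nat
  assume "length zs = 2" "i < 2"
  then show "klinear (\<lambda>x. g (zs[i := x] ! 0) (zs[i := x] ! 1))"
    using assms by (auto simp: less2_cases)
qed

lemma multilinear3:
  assumes "\<And>y z. klinear (\<lambda>x. g x y z)" and "\<And>x z. klinear (\<lambda>y. g x y z)"
    and "\<And>x y. klinear (\<lambda>z. g x y z)"
  shows "alg.multilinear_mod 3 (\<lambda>l. g (l!0) (l!1) (l!2))"
proof (rule alg.multilinear_modI)
  fix zs :: "'a list" and i :: nat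
  assume "length zs = 3" "i < 3"
  then show "klinear (\<lambda>x. g (zs[i := x] ! 0) (zs[i := x] ! 1) (zs[i := x] ! 2))"
    using assms by (auto simp: less3_cases)
qed

end

context biunital_bialgebra
begin

abbreviation D :: "'a \<Rightarrow> 'a list \<Rightarrow> 'k" where
  "D a \<equiv> rep (\<Delta> a)"

lemma D_free: "D a \<in> free 2"
  using T_rep[OF Delta_in_T] by blast

lemma finite_fsupp_D: "finite (fsupp (D a))"
  using D_free freeD by blast

lemma length_fsupp_D: "zs \<in> fsupp (D a) \<Longrightarrow> length zs = 2"
  using D_free freeD by blast

lemma cls_D: "cls 2 (D a) = \<Delta> a"
  using T_rep[OF Delta_in_T] by blast

lemma counit_left: "alin (D a) (\<lambda>xs. sc (\<epsilon> (xs!0)) (xs!1)) = a"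
  using bialgebra by (simp add: bialgebra_def)

lemma counit_right: "alin (D a) (\<lambda>xs. sc (\<epsilon> (xs!1)) (xs!0)) = a"
  using bialgebra by (simp add: bialgebra_def)

lemma eps_mult: "\<epsilon> (x * y) = \<epsilon> x * \<epsilon> y"
  using bialgebra by (simp add: bialgebra_def)

lemma coassoc_sum:
  assumes "\<And>y z. klinear (\<lambda>x. g x y z)" and "\<And>x z. klinear (\<lambda>y. g x y z)"
    and "\<And>x y. klinear (\<lambda>z. g x y z)"
  shows "alin (D a) (\<lambda>xs. alin (D (xs!0)) (\<lambda>zs. g (zs!0) (zs!1) (xs!1)))
       = alin (D a) (\<lambda>xs. alin (D (xs!1)) (\<lambda>zs. g (xs!0) (zs!0) (zs!1)))"
  using alg.lext_coassoc[OF bialgebra multilinear3[OF assms], of a] by simp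

lemma Delta_mult: "\<Delta> (x * y) = tmul 2 (\<Delta> x) (\<Delta> y)"
  using bialgebra by (simp add: bialgebra_def)

lemma D_mult_rel_equiv: "rel_equiv 2 (D (x * y)) (fmul (D x) (D y))"
proof -
  have "\<Delta> (x * y) = cls 2 (fmul (D x) (D y))"
    using tmul_cls[OF D_free D_free] by (simp add: cls_D Delta_mult)
  then show ?thesis
    using rep_cls(2)[of "fmul (D x) (D y)" 2] D_free by simp
qed

lemma alin_D_mult:
  assumes "\<And>y. klinear (\<lambda>x. g x y)" and "\<And>x. klinear (\<lambda>y. g x y)"
  shows "alin (D (x * y)) (\<lambda>ws. g (ws!0) (ws!1))
       = alin (D x) (\<lambda>xs. alin (D y) (\<lambda>ys. g (xs!0 * ys!0) (xs!1 * ys!1)))"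
proof -
  have "alin (D (x * y)) (\<lambda>ws. g (ws!0) (ws!1)) = alin (fmul (D x) (D y)) (\<lambda>ws. g (ws!0) (ws!1))"
    using D_mult_rel_equiv finite_fsupp_D freeD(1)[OF free_fmul[OF D_free D_free]] multilinear2[OF assms]
    by (rule alin_rel_equiv)
  also have "\<dots> = alin (D x) (\<lambda>xs. alin (D y) (\<lambda>ys. g (map2 (*) xs ys ! 0) (map2 (*) xs ys ! 1)))"
    by (rule alg.lext_fmul[OF finite_fsupp_D finite_fsupp_D])
  also have "\<dots> = alin (D x) (\<lambda>xs. alin (D y) (\<lambda>ys. g (xs!0 * ys!0) (xs!1 * ys!1)))"
    by (intro alg.lext_cong) (simp add: length_fsupp_D)
  finally show ?thesis .
qed

end

section \<open>The antipode is an anti-homomorphism\<close>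

locale hopf_algebra = biunital_bialgebra sc \<Delta> \<epsilon>
  for sc :: "'k::comm_ring_1 \<Rightarrow> 'a::ring_1 \<Rightarrow> 'a" and \<Delta> \<epsilon> +
  fixes S :: "'a \<Rightarrow> 'a"
  assumes hopf_antipode: "hopf_antipode \<Delta> \<epsilon> S"
begin

lemma klinear_S: "klinear S"
  using hopf_antipode by (simp add: hopf_antipode_def k_linear_def)

lemma S_sc: "S (sc c x) = sc c (S x)"
  using klinear_S by (simp add: k_linear_def)

lemma antipode_left: "alin (D a) (\<lambda>xs. S (xs!0) * xs!1) = sc (\<epsilon> a) 1"
  using hopf_antipode by (simp add: hopf_antipode_def)

lemma antipode_right: "alin (D a) (\<lambda>xs. xs!0 * S (xs!1)) = sc (\<epsilon> a) 1"
  using hopf_antipode by (simp add: hopf_antipode_def)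

lemma alin_S: "alin f (\<lambda>xs. S (F xs)) = S (alin f F)"
  using alin_klinear[OF klinear_S] .

lemma klinear_S_mult_left: "klinear (\<lambda>u. S (p * u) * q)"
  by (intro klinear_comp[OF klinear_mult_right] klinear_comp[OF klinear_S] klinear_mult_left)

lemma S_mult_expand:
  "S (p * b) * q = alin (D b) (\<lambda>ys. alin (D (ys!1)) (\<lambda>zs. S (p * ys!0) * q * (zs!0 * S (zs!1))))"
proof -
  have "S (p * b) * q = S (p * alin (D b) (\<lambda>ys. sc (\<epsilon> (ys!1)) (ys!0))) * q"
    by (simp only: counit_right)
  also have "\<dots> = alin (D b) (\<lambda>ys. S (p * sc (\<epsilon> (ys!1)) (ys!0)) * q)"
    by (rule alin_klinear[OF klinear_S_mult_left, symmetric])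
  also have "\<dots> = alin (D b) (\<lambda>ys. S (p * ys!0) * q * sc (\<epsilon> (ys!1)) 1)"
    by (intro alg.lext_cong) (metis S_sc sc_mult_left sc_mult_right sc_eq_mult_right)
  also have "\<dots> = alin (D b) (\<lambda>ys. alin (D (ys!1)) (\<lambda>zs. S (p * ys!0) * q * (zs!0 * S (zs!1))))"
    by (simp only: antipode_right alin_mult_left)
  finally show ?thesis .
qed

lemma antipode_left_mult:
  "alin (D u) (\<lambda>zs. alin (D x) (\<lambda>xs. S (xs!0 * zs!0) * (xs!1 * zs!1))) = sc (\<epsilon> x * \<epsilon> u) 1"
proof -
  have "alin (D u) (\<lambda>zs. alin (D x) (\<lambda>xs. S (xs!0 * zs!0) * (xs!1 * zs!1)))
      = alin (D x) (\<lambda>xs. alin (D u) (\<lambda>zs. S (xs!0 * zs!0) * (xs!1 * zs!1)))"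
    by (rule alg.lext_swap)
  also have "\<dots> = alin (D (x * u)) (\<lambda>ws. S (ws!0) * ws!1)"
    by (rule alin_D_mult[where g = "\<lambda>a b. S a * b", symmetric])
      (rule klinear_comp[OF klinear_mult_right klinear_S], rule klinear_mult_left)
  also have "\<dots> = sc (\<epsilon> x * \<epsilon> u) 1"
    by (simp only: antipode_left eps_mult)
  finally show ?thesis .
qed

text \<open>Expanding \<open>S(x\<^sub>1 b) = \<Sum> S(x\<^sub>1 b\<^sub>1) b\<^sub>2 S(b\<^sub>3)\<close> reduces this to the antipode axiom for
\<open>\<Delta>(x b\<^sub>1) = \<Delta>(x) \<Delta>(b\<^sub>1)\<close>.\<close>

lemma antipode_left_twisted: "alin (D x) (\<lambda>xs. S (xs!0 * b) * xs!1) = sc (\<epsilon> x) (S b)"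
proof -
  have coassoc: "alin (D b) (\<lambda>ys. alin (D (ys!1)) (\<lambda>zs. S (p * ys!0) * q * (zs!0 * S (zs!1))))
      = alin (D b) (\<lambda>ys. alin (D (ys!0)) (\<lambda>zs. S (p * zs!0) * q * (zs!1 * S (ys!1))))" for p q
    by (rule coassoc_sum[where g = "\<lambda>u v w. S (p * u) * q * (v * S w)", symmetric])
      (rule klinear_comp[OF klinear_mult_right klinear_S_mult_left],
       rule klinear_comp[OF klinear_mult_left klinear_mult_right],
       rule klinear_comp[OF klinear_mult_left klinear_comp[OF klinear_mult_left klinear_S]])
  have "alin (D x) (\<lambda>xs. S (xs!0 * b) * xs!1)
      = alin (D b) (\<lambda>ys. alin (D (ys!0)) (\<lambda>zs. alin (D x) (\<lambda>xs. S (xs!0 * zs!0) * xs!1 * (zs!1 * S (ys!1)))))"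
    by (simp only: S_mult_expand[of _ b] coassoc alg.lext_swap[of "D x"])
  also have "\<dots> = alin (D b) (\<lambda>ys. alin (D (ys!0)) (\<lambda>zs. alin (D x) (\<lambda>xs. S (xs!0 * zs!0) * (xs!1 * zs!1))) * S (ys!1))"
    by (simp only: mult.assoc[symmetric] alin_mult_right)
  also have "\<dots> = alin (D b) (\<lambda>ys. sc (\<epsilon> x) (S (sc (\<epsilon> (ys!0)) (ys!1))))"
    by (simp only: antipode_left_mult sc_mult S_sc sc_mult_left[symmetric] sc_eq_mult_left[symmetric] mult_1_left)
  also have "\<dots> = sc (\<epsilon> x) (S b)"
    by (simp only: alin_sc alin_S counit_left)
  finally show ?thesis .
qed

lemma antipode_mult: "S (a * b) = S b * S a"
proof -
  have "S (a * b) = S (alin (D a) (\<lambda>xs. sc (\<epsilon> (xs!1)) (xs!0)) * b)"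
    by (simp only: counit_right)
  also have "\<dots> = alin (D a) (\<lambda>xs. S (sc (\<epsilon> (xs!1)) (xs!0) * b))"
    by (rule alin_klinear[OF klinear_comp[OF klinear_S klinear_mult_right], symmetric])
  also have "\<dots> = alin (D a) (\<lambda>xs. alin (D (xs!1)) (\<lambda>zs. S (xs!0 * b) * (zs!0 * S (zs!1))))"
    by (intro alg.lext_cong)
      (metis S_sc sc_mult_left sc_eq_mult_right antipode_right alin_mult_left)
  also have "\<dots> = alin (D a) (\<lambda>xs. alin (D (xs!0)) (\<lambda>zs. S (zs!0 * b) * (zs!1 * S (xs!1))))"
    by (rule coassoc_sum[where g = "\<lambda>u v w. S (u * b) * (v * S w)", symmetric])
      (rule klinear_comp[OF klinear_mult_right klinear_comp[OF klinear_S klinear_mult_right]],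
       rule klinear_comp[OF klinear_mult_left klinear_mult_right],
       rule klinear_comp[OF klinear_mult_left klinear_comp[OF klinear_mult_left klinear_S]])
  also have "\<dots> = alin (D a) (\<lambda>xs. sc (\<epsilon> (xs!0)) (S b) * S (xs!1))"
    by (simp only: mult.assoc[symmetric] alin_mult_right antipode_left_twisted)
  also have "\<dots> = alin (D a) (\<lambda>xs. S b * S (sc (\<epsilon> (xs!0)) (xs!1)))"
    by (intro alg.lext_cong) (metis S_sc sc_mult_left sc_mult_right)
  also have "\<dots> = S b * S a"
    by (simp only: alin_mult_left alin_S counit_left)
  finally show ?thesis .
qed

lemma multilinear_mult_S: "alg.multilinear_mod 2 (\<lambda>xs. xs!0 * c * S (xs!1))"
  by (rule multilinear2[where g = "\<lambda>x y. x * c * S y"])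
    (rule klinear_comp[OF klinear_mult_right klinear_mult_right],
     rule klinear_comp[OF klinear_mult_left klinear_S])

lemma multilinear_mulS: "alg.multilinear_mod 2 (\<lambda>xs. xs!0 * S (xs!1))"
  using multilinear_mult_S[of 1] by simp

lemma antipode_one: "S 1 = 1"
proof -
  note multilinear_mulS
  moreover have "D 1 = rep (cls 2 (bv [1, 1]))"
    using bialgebra by (simp add: bialgebra_def tone2_eq_cls)
  ultimately have "alin (D 1) (\<lambda>xs. xs!0 * S (xs!1)) = alin (bv [1, 1]) (\<lambda>xs. xs!0 * S (xs!1))"
    using bv2_in_free rep_cls[of "bv [1, 1]" 2] by (intro alin_rel_equiv) (auto dest: freeD)
  moreover have "\<epsilon> 1 = 1"
    using bialgebra by (simp add: bialgebra_def)
  ultimately show ?thesis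
    using antipode_right[of 1] by simp
qed

end

context hopf_algebra
begin

definition mulS :: "('a list \<Rightarrow> 'k) set \<Rightarrow> 'a" where
  "mulS X = alin (rep X) (\<lambda>xs. xs!0 * S (xs!1))"

lemma mulS_cls:
  assumes "f \<in> free 2"
  shows "mulS (cls 2 f) = alin f (\<lambda>xs. xs!0 * S (xs!1))"
  unfolding mulS_def using assms rep_cls[OF assms]
  by (intro alin_rel_equiv[OF rep_cls(2)[OF assms] _ _ multilinear_mulS]) (auto dest: freeD)

lemma mulS_tadd: "X \<in> T 2 \<Longrightarrow> Y \<in> T 2 \<Longrightarrow> mulS (tadd 2 X Y) = mulS X + mulS Y"
  by (elim T_cases) (simp add: tadd_cls mulS_cls free_add alg.lext_add freeD(1))

lemma mulS_tsc: "X \<in> T 2 \<Longrightarrow> mulS (tsc 2 c X) = sc c (mulS X)"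
  by (elim T_cases) (simp add: tsc_cls mulS_cls free_smul alg.lext_smul freeD(1))

lemma mulS_tneg: "X \<in> T 2 \<Longrightarrow> mulS (tneg 2 X) = - mulS X"
  by (elim T_cases) (simp add: tneg_cls mulS_cls free_neg alg.lext_neg freeD(1))

lemma mulS_tzero: "mulS (tzero 2) = 0"
  by (simp add: tzero_def mulS_cls alin_def fsupp_def)

lemma mulS_tens: "mulS (tens [a, b]) = a * S b"
  by (simp add: tens2_eq_cls mulS_cls bv2_in_free alin_def bv_apply)

lemma mulS_Delta: "mulS (\<Delta> a) = sc (\<epsilon> a) 1"
  unfolding mulS_def by (rule antipode_right)

lemma mulS_tone: "mulS (tone 2) = 1"
proof -
  have "tone 2 = tens [1, 1]"
    by (simp add: tone_def numeral_2_eq_2)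
  then show ?thesis
    by (simp add: mulS_tens antipode_one)
qed

lemma mulS_tmul:
  assumes "B \<in> T 2" and "X \<in> T 2"
  shows "mulS (tmul 2 B X) = alin (rep B) (\<lambda>xs. xs!0 * mulS X * S (xs!1))"
proof -
  obtain f g where fg: "f \<in> free 2" "g \<in> free 2" "B = cls 2 f" "X = cls 2 g"
    using assms by (metis T_cases)
  have "mulS (tmul 2 B X) = alin (fmul f g) (\<lambda>xs. xs!0 * S (xs!1))"
    using fg by (simp add: tmul_cls mulS_cls)
  also have "\<dots> = alin f (\<lambda>xs. alin g (\<lambda>ys. map2 (*) xs ys ! 0 * S (map2 (*) xs ys ! 1)))"
    using fg freeD(1) by (intro alg.lext_fmul) auto
  also have "\<dots> = alin f (\<lambda>xs. alin g (\<lambda>ys. xs!0 * (ys!0 * S (ys!1)) * S (xs!1)))"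
    using fg by (intro alg.lext_cong) (auto dest!: freeD(2) simp: antipode_mult mult.assoc)
  also have "\<dots> = alin f (\<lambda>xs. xs!0 * mulS X * S (xs!1))"
    using fg by (simp only: alin_mult_left alin_mult_right mulS_cls)
  also have "\<dots> = alin (rep B) (\<lambda>xs. xs!0 * mulS X * S (xs!1))"
    unfolding fg(3) using fg rep_cls[of f 2]
    by (intro alin_rel_equiv[OF rep_cls(2)[OF fg(1)] _ _ multilinear_mult_S, symmetric]) (auto dest: freeD)
  finally show ?thesis .
qed

lemma mulS_vanishes_on_W: "x \<in> W \<Longrightarrow> mulS x = 0"
proof (induction rule: W_induct)
  case (generator a)
  then show ?case
    by (simp add: W_gen_def mulS_tadd mulS_tsc mulS_tneg mulS_tone mulS_Delta)
qed (simp_all add: mulS_tzero mulS_tadd mulS_tneg mulS_tmul)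

lemma mulS_qcls_rep: "x \<in> T 2 \<Longrightarrow> mulS (rep (qcls W x)) = mulS x"
  using mulS_vanishes_on_W[of "tdiff (rep (qcls W x)) x"] rep_qcls[of x]
  by (simp add: mulS_tadd mulS_tneg)

end

section \<open>\<open>(A \<otimes> A)/W\<close> is the modulation of \<open>S\<close>\<close>

context hopf_algebra
begin

lemma multilinear_bv_S_mult: "free2.multilinear_mod 3 (\<lambda>l. bv [S (l!0) * l!1, l!2])"
proof (rule multilinear_mod_bv2)
  fix zs :: "'a list" and i :: nat
  assume l: "length zs = 3" "i < 3"
  then consider "i = 0" | "i = 1" | "i = 2"
    by linarith
  then show "\<exists>j \<phi>. j < 2 \<and> klinear \<phi> \<and>
      (\<forall>x. [S (zs[i := x] ! 0) * zs[i := x] ! 1, zs[i := x] ! 2] = [S (zs ! 0) * zs ! 1, zs ! 2][j := \<phi> x])"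
  proof cases
    case 1
    then show ?thesis
      using l klinear_comp[OF klinear_mult_right klinear_S] by (intro exI[of _ 0] exI[of _ "\<lambda>x. S x * zs!1"]) simp
  next
    case 2
    then show ?thesis
      using l klinear_mult_left by (intro exI[of _ 0] exI[of _ "\<lambda>x. S (zs!0) * x"]) simp
  next
    case 3
    then show ?thesis
      using l by (intro exI[of _ 1] exI[of _ "\<lambda>x. x"]) (simp add: k_linear_def)
  qed
qed simp

text \<open>\<open>\<Sum> (S(v\<^sub>1) \<otimes> 1) \<Delta>(v\<^sub>2) = \<Sum> S(v\<^sub>1) v\<^sub>2 \<otimes> v\<^sub>3 = 1 \<otimes> v\<close>, by coassociativity and the antipode
axiom.\<close>

lemma sum_S_tensor_Delta: "rel_equiv 2 (flin (D v) (\<lambda>xs. fmul (bv [S (xs!0), 1]) (D (xs!1)))) (bv [1, v])"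
proof -
  have "flin (D v) (\<lambda>xs. fmul (bv [S (xs!0), 1]) (D (xs!1)))
      = flin (D v) (\<lambda>xs. flin (D (xs!1)) (\<lambda>zs. bv [S ([xs!0, zs!0, zs!1] ! 0) * [xs!0, zs!0, zs!1] ! 1,
          [xs!0, zs!0, zs!1] ! 2]))"
    by (simp add: fmul_bv2_one[OF D_free])
  also have "rel_equiv 2 \<dots> (flin (D v) (\<lambda>xs. flin (D (xs!0)) (\<lambda>zs. bv [S ([zs!0, zs!1, xs!1] ! 0) *
      [zs!0, zs!1, xs!1] ! 1, [zs!0, zs!1, xs!1] ! 2])))"
    using free2.lext_coassoc[OF bialgebra multilinear_bv_S_mult, of v]
    by (simp only: diff_in_rel_iff rel_equiv_sym)
  also have "\<dots> = flin (D v) (\<lambda>xs. flin (D (xs!0)) (\<lambda>zs. bv [S (zs!0) * zs!1, xs!1]))"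
    by simp
  also have "rel_equiv 2 \<dots> (flin (D v) (\<lambda>xs. bv [alin (D (xs!0)) (\<lambda>zs. S (zs!0) * zs!1), xs!1]))"
    by (intro flin_cong_rel_equiv flin_bv2_left finite_fsupp_D)
  also have "\<dots> = flin (D v) (\<lambda>xs. bv [sc (\<epsilon> (xs!0)) 1, xs!1])"
    by (simp only: antipode_left)
  also have "rel_equiv 2 \<dots> (flin (D v) (\<lambda>xs. bv [1, sc (\<epsilon> (xs!0)) (xs!1)]))"
    by (intro flin_cong_rel_equiv rel_equiv_trans[OF bv2_sc_left rel_equiv_sym[OF bv2_sc_right]])
  also have "rel_equiv 2 \<dots> (bv [1, alin (D v) (\<lambda>xs. sc (\<epsilon> (xs!0)) (xs!1))])"
    by (intro flin_bv2_right finite_fsupp_D)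
  also have "\<dots> = bv [1, v]"
    by (simp only: counit_left)
  finally show ?thesis .
qed

lemma qcls_one_tens: "qcls W (tens [1, v]) = qcls W (tens [S v, 1])"
proof -
  define A where "A xs = fmul (bv [S (xs!0), 1]) (D (xs!1))" for xs
  define B where "B xs = (\<lambda>z. \<epsilon> (xs!1) * bv [S (xs!0), 1] z)" for xs
  have free: "A xs \<in> free 2" "B xs \<in> free 2" for xs
    unfolding A_def B_def by (simp_all add: bv2_in_free D_free free_smul)
  have "cls 2 (A xs) = tmul 2 (tens [S (xs!0), 1]) (\<Delta> (xs!1))" for xs
    unfolding A_def tens2_eq_cls by (metis cls_D tmul_cls[OF bv2_in_free D_free])
  moreover have "cls 2 (B xs) = tsc 2 (\<epsilon> (xs!1)) (tens [S (xs!0), 1])" for xs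
    unfolding B_def tens2_eq_cls by (simp add: tsc_cls bv2_in_free)
  ultimately have "qcls W (cls 2 (A xs)) = qcls W (cls 2 (B xs))" for xs
    by (simp add: qcls_tmul_Delta)
  then have "qcls W (cls 2 (flin (D v) A)) = qcls W (cls 2 (flin (D v) B))"
    using free by (intro qcls_flin_cong finite_fsupp_D) auto
  moreover have "cls 2 (flin (D v) A) = tens [1, v]"
    unfolding tens2_eq_cls A_def using sum_S_tensor_Delta free(1) finite_fsupp_D
    by (intro cls_eqI free_flin) (auto simp: A_def bv2_in_free)
  moreover have "cls 2 (flin (D v) B) = tens [S v, 1]"
  proof -
    have "rel_equiv 2 (flin (D v) B) (flin (D v) (\<lambda>xs. bv [sc (\<epsilon> (xs!1)) (S (xs!0)), 1]))"
      unfolding B_def by (intro flin_cong_rel_equiv rel_equiv_sym[OF bv2_sc_left])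
    also have "rel_equiv 2 \<dots> (bv [alin (D v) (\<lambda>xs. sc (\<epsilon> (xs!1)) (S (xs!0))), 1])"
      by (intro flin_bv2_left finite_fsupp_D)
    also have "\<dots> = bv [S v, 1]"
      by (simp only: S_sc[symmetric] alin_S counit_right)
    finally show ?thesis
      unfolding tens2_eq_cls using free(2) finite_fsupp_D
      by (intro cls_eqI free_flin) (auto simp: bv2_in_free)
  qed
  ultimately show ?thesis
    by simp
qed

lemma qcls_tens: "qcls W (tens [a, b]) = qcls W (tens [a * S b, 1])"
proof -
  have "qcls W (tens [a, b]) = qact W (tens [a, 1]) (qcls W (tens [1, b]))"
    by (simp add: qact_qcls tens2_mult)
  also have "\<dots> = qact W (tens [a, 1]) (qcls W (tens [S b, 1]))"
    by (simp only: qcls_one_tens)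
  also have "\<dots> = qcls W (tens [a * S b, 1])"
    by (simp add: qact_qcls tens2_mult)
  finally show ?thesis .
qed

lemma qcls_eq_mulS:
  assumes x: "x \<in> T 2"
  shows "qcls W x = qcls W (tens [mulS x, 1])"
proof -
  obtain f where f: "f \<in> free 2" "x = cls 2 f"
    using x by (rule T_cases)
  have fin: "finite (fsupp f)" and len: "xs \<in> fsupp f \<Longrightarrow> xs = [xs!0, xs!1]" for xs
    using f freeD length2_conv by blast+
  define B where "B xs = (bv [xs!0 * S (xs!1), 1] :: 'a list \<Rightarrow> 'k)" for xs
  have "qcls W (cls 2 (flin f bv)) = qcls W (cls 2 (flin f B))"
    using fin
  proof (rule qcls_flin_cong)
    fix xs
    assume "xs \<in> fsupp f"
    then show "bv xs \<in> free 2 \<and> B xs \<in> free 2 \<and> qcls W (cls 2 (bv xs)) = qcls W (cls 2 (B xs))"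
      using qcls_tens[of "xs!0" "xs!1"] len[of xs] f(1) freeD(2)
      unfolding B_def tens2_eq_cls by (metis bv_in_free bv2_in_free)
  qed
  moreover have "cls 2 (flin f bv) = x"
    using f flin_bv[OF fin] by simp
  moreover have "cls 2 (flin f B) = tens [mulS x, 1]"
    unfolding tens2_eq_cls f(2) mulS_cls[OF f(1)] B_def using fin bv2_in_free
    by (intro cls_eqI flin_bv2_left free_flin) auto
  ultimately show ?thesis
    by simp
qed

definition quot_mulS :: "('a list \<Rightarrow> 'k) set set \<Rightarrow> 'a" where
  "quot_mulS q = mulS (rep q)"

lemma quot_mulS_qcls: "x \<in> T 2 \<Longrightarrow> quot_mulS (qcls W x) = mulS x"
  by (simp add: quot_mulS_def mulS_qcls_rep)

lemma quot_mulS_tens_one: "quot_mulS (qcls W (tens [a, 1])) = a"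
  by (simp add: quot_mulS_qcls mulS_tens antipode_one)

lemma range_qcls_tens_one: "range (\<lambda>a. qcls W (tens [a, 1])) = Q W"
proof
  show "Q W \<subseteq> range (\<lambda>a. qcls W (tens [a, 1]))"
  proof
    fix q
    assume "q \<in> Q W"
    then obtain x where "x \<in> T 2" "q = qcls W x"
      by (rule Q_cases)
    then show "q \<in> range (\<lambda>a. qcls W (tens [a, 1]))"
      using qcls_eq_mulS by blast
  qed
qed auto

lemma bij_quot_mulS: "bij_betw quot_mulS (Q W) UNIV"
proof (rule bij_betw_byWitness[where f' = "\<lambda>a. qcls W (tens [a, 1])"])
  show "\<forall>q\<in>Q W. qcls W (tens [quot_mulS q, 1]) = q"
    by (auto elim!: Q_cases simp: quot_mulS_qcls qcls_eq_mulS[symmetric])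
qed (auto simp: quot_mulS_tens_one)

theorem quotient_iso_modulation:
  "\<exists>\<psi>. bij_betw \<psi> (Q W) UNIV \<and>
      (\<forall>p\<in>Q W. \<forall>q\<in>Q W. \<psi> (qadd W p q) = \<psi> p + \<psi> q) \<and>
      (\<forall>b\<in>T 2. \<forall>q\<in>Q W. \<psi> (qact W b q) = smod_act S b (\<psi> q)) \<and>
      (\<forall>a b. \<psi> (qcls W (tens [a, b])) = a * S b)"
proof (intro exI[of _ quot_mulS] conjI)
  show "bij_betw quot_mulS (Q W) UNIV"
    by (rule bij_quot_mulS)
  show "\<forall>p\<in>Q W. \<forall>q\<in>Q W. quot_mulS (qadd W p q) = quot_mulS p + quot_mulS q"
    unfolding Q_ball by (simp add: qadd_qcls quot_mulS_qcls mulS_tadd)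
  show "\<forall>b\<in>T 2. \<forall>q\<in>Q W. quot_mulS (qact W b q) = smod_act S b (quot_mulS q)"
    unfolding Q_ball by (simp add: qact_qcls quot_mulS_qcls mulS_tmul smod_act_def)
  show "\<forall>a b. quot_mulS (qcls W (tens [a, b])) = a * S b"
    by (simp add: quot_mulS_qcls mulS_tens)
qed

theorem hopfish_quotient: "hopfish \<Delta> \<epsilon> (Q W) (qadd W) (qact W)"
  unfolding hopfish_def free_rank_one_def
proof (intro conjI preantipode_quotient bexI[of _ "qcls W (tone 2)"])
  have "qact W (tens [a, 1]) (qcls W (tone 2)) = qcls W (tens [a, 1])" for a
    by (simp add: qact_qcls tmul_tone_right)
  moreover have "inj (\<lambda>a. qcls W (tens [a, 1]))"
    by (metis (mono_tags, lifting) injI quot_mulS_tens_one)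
  ultimately show "bij_betw (\<lambda>a. qact W (tens [a, 1]) (qcls W (tone 2))) UNIV (Q W)"
    using range_qcls_tens_one by (simp add: bij_betw_def)
qed simp

end

theorem theorem4p2:
  fixes sc :: "'k::comm_ring_1 \<Rightarrow> 'a::ring_1 \<Rightarrow> 'a"
    and \<Delta> :: "'a \<Rightarrow> ('a list \<Rightarrow> 'k) set"
    and \<epsilon> :: "'a \<Rightarrow> 'k"
  assumes bialg: "kctx.bialgebra sc \<Delta> \<epsilon>"
  shows "kctx.preantipode sc \<Delta> \<epsilon> (kctx.Q sc (kctx.Wid sc \<Delta> \<epsilon>))
           (kctx.qadd sc (kctx.Wid sc \<Delta> \<epsilon>)) (kctx.qact sc (kctx.Wid sc \<Delta> \<epsilon>)) \<and>
         (\<forall>S. kctx.hopf_antipode sc \<Delta> \<epsilon> S \<longrightarrow>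
           (\<exists>\<psi>. bij_betw \<psi> (kctx.Q sc (kctx.Wid sc \<Delta> \<epsilon>)) UNIV \<and>
              (\<forall>p\<in>kctx.Q sc (kctx.Wid sc \<Delta> \<epsilon>). \<forall>q\<in>kctx.Q sc (kctx.Wid sc \<Delta> \<epsilon>).
                  \<psi> (kctx.qadd sc (kctx.Wid sc \<Delta> \<epsilon>) p q) = \<psi> p + \<psi> q) \<and>
              (\<forall>b\<in>kctx.T sc 2. \<forall>q\<in>kctx.Q sc (kctx.Wid sc \<Delta> \<epsilon>).
                  \<psi> (kctx.qact sc (kctx.Wid sc \<Delta> \<epsilon>) b q) = kctx.smod_act sc S b (\<psi> q)) \<and>
              (\<forall>a b. \<psi> (kctx.qcls sc (kctx.Wid sc \<Delta> \<epsilon>) (kctx.tens sc [a, b])) = a * S b))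
           \<and> kctx.hopfish sc \<Delta> \<epsilon> (kctx.Q sc (kctx.Wid sc \<Delta> \<epsilon>))
               (kctx.qadd sc (kctx.Wid sc \<Delta> \<epsilon>)) (kctx.qact sc (kctx.Wid sc \<Delta> \<epsilon>)))"
proof -
  have bialgebra_locale: "biunital_bialgebra sc \<Delta> \<epsilon>"
    using bialg by unfold_locales (simp_all add: kctx.bialgebra_def)
  then interpret biunital_bialgebra sc \<Delta> \<epsilon> .
  have hopf: "hopf_algebra sc \<Delta> \<epsilon> S" if "hopf_antipode \<Delta> \<epsilon> S" for S
    using bialgebra_locale that by (intro hopf_algebra.intro hopf_algebra_axioms.intro)
  show ?thesis
    using preantipode_quotient hopf_algebra.quotient_iso_modulation[OF hopf]
      hopf_algebra.hopfish_quotient[OF hopf]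
    by blast
qed

end
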